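(* Let $\rho, \alpha,\gamma > 0$ with $\rho + \alpha \leq \frac{1}{100}$ and $\gamma \leq \frac{1}{30}$. Let $G$ be an $(n,d,\lambda)$-graph with $n$ even and $\lambda \leq \frac{d}{12}$. Then for every balanced bipartition $\{X,Y\}$ of $V(G)$, the bipartite graph $G[X,Y]$ is $(d,\rho,\alpha,\gamma)$-good.
   Context: For a graph $G$ on $n$ vertices with adjacency matrix eigenvalues $\lambda_1\geq\dots\geq\lambda_n$, $\lambda(G):=\max\{|\lambda_2|,|\lambda_n|\}$; an $(n,d,\lambda)$-graph is a $d$-regular simple graph on $n$ vertices with $\lambda(G)\leq\lambda$. A balanced bipartition $\{X,Y\}$ has $|X|=|Y|$. For disjoint $X,Y$, $G[X,Y]$ is the bipartite graph on $X\cup Y$ of all edges of $G$ between $X$ and $Y$. For a function $f:V(H)\to\mathbb N$, an $f$-factor of $H$ is a spanning subgraph in which every vertex $v$ has degree exactly $f(v)$; for $S\subseteq V(H)$, $f(S):=\sum_{v\in S}f(v)$. For a subgraph $F\subseteq H$, $H\setminus F$ is the spanning subgraph with edge set $E(H)\setminus E(F)$. Definition (robustly matchable): a balanced bipartite graph $H=(X\cup Y,E)$ is $(d,\rho,\alpha,\gamma)$-robustly matchable if for every subgraph $F\subseteq H$ of maximum degree at most $\rho d$ and every real $0<\alpha'\leq\alpha$, the graph $H\setminus F$ has an $f$-factor for every integer-valued function $f:X\cup Y\to[(1-\gamma)\alpha' d,\alpha' d]$ with $f(X)=f(Y)$. Definition (good): a balanced bipartite graph $H=(X\cup Y,E)$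 is $(d,\rho,\alpha,\gamma)$-good if for all $X'\subseteq X$, $Y'\subseteq Y$ with $|X'|=|Y'|$ and minimum degree $\delta(H[X',Y'])\geq\frac d5$, the graph $H[X',Y']$ is $(d,\rho,\alpha,\gamma)$-robustly matchable. *)

theory Defs
  imports "Jordan_Normal_Form.Char_Poly" "HOL-Computational_Algebra.Polynomial" "HOL-Library.Multiset"
begin

definition simple_graph :: "nat \<Rightarrow> (nat \<Rightarrow> nat \<Rightarrow> bool) \<Rightarrow> bool" where
  "simple_graph n E \<longleftrightarrow> (\<forall>u v. E u v \<longrightarrow> u < n \<and> v < n) \<and> (\<forall>u v. E u v \<longrightarrow> E v u) \<and> (\<forall>v. \<not> E v v)"

definition regular :: "nat \<Rightarrow> (nat \<Rightarrow> nat \<Rightarrow> bool) \<Rightarrow> nat \<Rightarrow> bool" where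
  "regular n E d \<longleftrightarrow> (\<forall>v < n. card {u. u < n \<and> E v u} = d)"

definition adj_matrix :: "nat \<Rightarrow> (nat \<Rightarrow> nat \<Rightarrow> bool) \<Rightarrow> real mat" where
  "adj_matrix n E = mat n n (\<lambda>(i, j). if E i j then 1 else 0)"

text \<open>Eigenvalues with multiplicity (roots of the characteristic polynomial), in non-increasing order
  lambda_1 >= ... >= lambda_n (list index 0 .. n-1).\<close>
definition eigs :: "nat \<Rightarrow> (nat \<Rightarrow> nat \<Rightarrow> bool) \<Rightarrow> real list" where
  "eigs n E = rev (sorted_list_of_multiset (proots (char_poly (adj_matrix n E))))"

definition graph_lambda :: "nat \<Rightarrow> (nat \<Rightarrow> nat \<Rightarrow> bool) \<Rightarrow> real" where
  "graph_lambda n E = max \<bar>eigs n E ! 1\<bar> \<bar>eigs n E ! (n - 1)\<bar>"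

definition ndl_graph :: "nat \<Rightarrow> nat \<Rightarrow> real \<Rightarrow> (nat \<Rightarrow> nat \<Rightarrow> bool) \<Rightarrow> bool" where
  "ndl_graph n d lam E \<longleftrightarrow> simple_graph n E \<and> regular n E d \<and> graph_lambda n E \<le> lam"

text \<open>Bipartite graphs: edge sets are sets of pairs (x,y) with x in X and y in Y.
  G[X,Y] is the bipartite graph of all edges of G between X and Y.\<close>
definition bip_edges :: "(nat \<Rightarrow> nat \<Rightarrow> bool) \<Rightarrow> nat set \<Rightarrow> nat set \<Rightarrow> (nat \<times> nat) set" where
  "bip_edges E X Y = {(x, y). x \<in> X \<and> y \<in> Y \<and> E x y}"

definition bdeg :: "(nat \<times> nat) set \<Rightarrow> nat \<Rightarrow> nat" where
  "bdeg S v = card {u. (v, u) \<in> S} + card {u. (u, v) \<in> S}"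

definition is_f_factor :: "nat set \<Rightarrow> nat set \<Rightarrow> (nat \<times> nat) set \<Rightarrow> (nat \<Rightarrow> nat) \<Rightarrow> (nat \<times> nat) set \<Rightarrow> bool" where
  "is_f_factor X Y H f S \<longleftrightarrow> S \<subseteq> H \<and> (\<forall>v \<in> X \<union> Y. bdeg S v = f v)"

definition robustly_matchable ::
  "nat set \<Rightarrow> nat set \<Rightarrow> (nat \<times> nat) set \<Rightarrow> real \<Rightarrow> real \<Rightarrow> real \<Rightarrow> real \<Rightarrow> bool" where
  "robustly_matchable X Y H d \<rho> \<alpha> \<gamma> \<longleftrightarrow>
     (\<forall>F \<alpha>'. F \<subseteq> H \<and> (\<forall>v \<in> X \<union> Y. real (bdeg F v) \<le> \<rho> * d) \<and> 0 < \<alpha>' \<and> \<alpha>' \<le> \<alpha> \<longrightarrow>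
       (\<forall>f :: nat \<Rightarrow> nat.
          (\<forall>v \<in> X \<union> Y. (1 - \<gamma>) * \<alpha>' * d \<le> real (f v) \<and> real (f v) \<le> \<alpha>' * d) \<and>
          (\<Sum>v\<in>X. f v) = (\<Sum>v\<in>Y. f v) \<longrightarrow>
          (\<exists>S. is_f_factor X Y (H - F) f S)))"

definition good :: "nat set \<Rightarrow> nat set \<Rightarrow> (nat \<times> nat) set \<Rightarrow> real \<Rightarrow> real \<Rightarrow> real \<Rightarrow> real \<Rightarrow> bool" where
  "good X Y H d \<rho> \<alpha> \<gamma> \<longleftrightarrow>
     (\<forall>X' Y'. X' \<subseteq> X \<and> Y' \<subseteq> Y \<and> card X' = card Y' \<and>
        (\<forall>v \<in> X' \<union> Y'. real (bdeg (H \<inter> (X' \<times> Y')) v) \<ge> d / 5) \<longrightarrow>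
        robustly_matchable X' Y' (H \<inter> (X' \<times> Y')) d \<rho> \<alpha> \<gamma>)"

end

theory Submission
  imports Defs "Jordan_Normal_Form.Schur_Decomposition"
begin

text \<open>Let \<open>H = G[X', Y']\<close> with minimum degree \<open>d/5\<close> and let \<open>F\<close> have maximum degree \<open>\<rho>d\<close>. By an
  Ore-type criterion, proved with alternating paths, \<open>H - F\<close> has an \<open>f\<close>-factor as soon as
  \<open>f(A) \<le> f(B) + e(A, Y' - B)\<close> for all \<open>A \<subseteq> X'\<close> and \<open>B \<subseteq> Y'\<close>, where \<open>e\<close> counts edges of \<open>H - F\<close>.
  Minimum degree gives \<open>e(A, Y' - B) \<ge> |A|(d/5 - \<rho>d) - e\<^sub>G(A, B)\<close>, symmetrically for \<open>Y' - B\<close>,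
  and deleting \<open>F\<close> loses at most \<open>\<rho>d\<close> edges per vertex. The expander mixing lemma, derived from
  the spectral theorem for real symmetric matrices, controls the counts \<open>e\<^sub>G\<close>; distinguishing
  whether \<open>A\<close> or \<open>Y' - B\<close> has at most \<open>n/10\<close> vertices finishes the verification.\<close>

section \<open>The spectral theorem for real symmetric matrices\<close>

lemma real_symmetric_complex_eigenvalue_real:
  fixes A :: "real mat"
  assumes A: "A \<in> carrier_mat n n" and sym: "A\<^sup>T = A"
    and ev: "eigenvector (map_mat complex_of_real A) v \<mu>"
  shows "cnj \<mu> = \<mu>"
proof -
  let ?Ac = "map_mat complex_of_real A"
  have v: "v \<in> carrier_vec n" "v \<noteq> 0\<^sub>v n" "?Ac *\<^sub>v v = \<mu> \<cdot>\<^sub>v v"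
    using ev A unfolding eigenvector_def by auto
  have Aij: "A $$ (i, j) = A $$ (j, i)" if "i < n" "j < n" for i j
    using that A by (metis sym carrier_matD index_transpose_mat(1))
  have row: "(\<Sum>j<n. of_real (A $$ (i, j)) * v $ j) = \<mu> * v $ i" if i: "i < n" for i
  proof -
    have "(?Ac *\<^sub>v v) $ i = (\<Sum>j<n. of_real (A $$ (i, j)) * v $ j)"
      using i A v(1) by (auto simp: scalar_prod_def lessThan_atLeast0 intro!: sum.cong)
    then show ?thesis using v(1,3) i by simp
  qed
  define s where "s = (\<Sum>i<n. \<Sum>j<n. cnj (v $ i) * of_real (A $$ (i, j)) * v $ j)"
  define N where "N = (\<Sum>i<n. (cmod (v $ i))\<^sup>2)"
  have "s = (\<Sum>i<n. cnj (v $ i) * (\<mu> * v $ i))"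
    unfolding s_def by (simp add: row sum_distrib_left mult.assoc flip: row)
  also have "\<dots> = \<mu> * of_real N"
    unfolding N_def of_real_sum sum_distrib_left
    by (intro sum.cong refl) (metis complex_norm_square mult.commute mult.left_commute)
  finally have s_eq: "s = \<mu> * of_real N" .
  have "cnj s = (\<Sum>i<n. \<Sum>j<n. v $ i * of_real (A $$ (i, j)) * cnj (v $ j))"
    unfolding s_def by simp
  also have "\<dots> = (\<Sum>j<n. \<Sum>i<n. v $ i * of_real (A $$ (i, j)) * cnj (v $ j))"
    by (rule sum.swap)
  also have "\<dots> = s" unfolding s_def
    by (intro sum.cong refl) (simp add: Aij mult.commute mult.left_commute)
  finally have "cnj s = s" .
  moreover obtain i where i: "i < n" "v $ i \<noteq> 0"
    using v(1,2) by (metis eq_vecI carrier_vecD index_zero_vec)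
  then have "N > 0" unfolding N_def by (intro sum_pos2[of _ i]) auto
  ultimately show ?thesis using s_eq by (metis complex_cnj_complex_of_real complex_cnj_mult
      mult_cancel_right of_real_eq_0_iff less_irrefl)
qed

lemma real_symmetric_has_eigenvalue:
  fixes A :: "real mat"
  assumes A: "A \<in> carrier_mat n n" and sym: "A\<^sup>T = A" and n: "n > 0"
  shows "\<exists>e. eigenvalue A e"
proof -
  let ?Ac = "map_mat complex_of_real A"
  have Ac: "?Ac \<in> carrier_mat n n" using A by simp
  have cp: "char_poly ?Ac = map_poly of_real (char_poly A)"
    by (rule of_real_hom.char_poly_hom[OF A])
  have "\<not> constant (poly (char_poly ?Ac))"
    using degree_monic_char_poly[OF Ac] n by (simp add: constant_degree)
  then obtain \<mu> where \<mu>: "poly (char_poly ?Ac) \<mu> = 0"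
    using fundamental_theorem_of_algebra by blast
  then obtain v where "eigenvector ?Ac v \<mu>"
    using eigenvalue_root_char_poly[OF Ac] unfolding eigenvalue_def by blast
  then have "\<mu> = of_real (Re \<mu>)"
    using real_symmetric_complex_eigenvalue_real[OF A sym] by (metis Reals_cnj_iff of_real_Re)
  then have "poly (char_poly A) (Re \<mu>) = 0"
    using \<mu> unfolding cp by (metis of_real_eq_0_iff of_real_hom.poly_map_poly)
  then show ?thesis using eigenvalue_root_char_poly[OF A] by blast
qed

lemma orthonormal_completion:
  fixes u :: "real vec"
  assumes u: "u \<in> carrier_vec n" and u1: "u \<bullet> u = 1"
  shows "\<exists>W. W \<in> carrier_mat n n \<and> W\<^sup>T * W = 1\<^sub>m n \<and> col W 0 = u"
proof -
  have u0: "u \<noteq> 0\<^sub>v n" using u1 u by auto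
  interpret cof_vec_space n "TYPE(real)" .
  define b where "b = basis_completion u"
  define ws where "ws = gram_schmidt n b"
  from basis_completion[OF u u0, folded b_def]
  have dist_b: "distinct b" and indep: "\<not> lin_dep (set b)" and b: "set b \<subseteq> carrier_vec n"
    and hdb: "hd b = u" and len_b: "length b = n" by auto
  have n: "n > 0" using u0 u by (cases n) auto
  from hdb len_b n obtain vs where bv: "b = u # vs" by (cases b) auto
  from gram_schmidt_result[OF b dist_b indep refl, folded ws_def]
  have ws: "set ws \<subseteq> carrier_vec n" "corthogonal ws" "length ws = n" by (auto simp: len_b)
  have ws0: "ws ! 0 = u"
    using gram_schmidt_hd[OF u, of vs, folded bv ws_def] ws(3) n by (cases ws) auto
  have wsn: "ws ! i \<in> carrier_vec n" if "i < n" for i using ws that by auto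
  have orth: "ws ! i \<bullet> ws ! j = 0 \<longleftrightarrow> i \<noteq> j" if "i < n" "j < n" for i j
    using corthogonalD[OF ws(2), of i j] that ws(3) by simp
  have pos: "ws ! i \<bullet> ws ! i > 0" if "i < n" for i
    using orth[OF that that] conjugate_square_ge_0_vec[of "ws ! i"] by (simp add: order_le_less)
  define W where "W = mat_of_cols n (map (\<lambda>w. (1 / sqrt (w \<bullet> w)) \<cdot>\<^sub>v w) ws)"
  have W: "W \<in> carrier_mat n n" unfolding W_def using mat_of_cols_carrier(1)[of n "map _ ws"] ws(3) by simp
  have colW: "col W i = (1 / sqrt (ws ! i \<bullet> ws ! i)) \<cdot>\<^sub>v ws ! i" if "i < n" for i
    unfolding W_def using that ws(3) wsn by (subst col_mat_of_cols) auto
  have "W\<^sup>T * W = 1\<^sub>m n"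
  proof (rule eq_matI)
    fix i j assume "i < dim_row (1\<^sub>m n)" "j < dim_col (1\<^sub>m n)"
    then have i: "i < n" and j: "j < n" by auto
    have "(W\<^sup>T * W) $$ (i, j) = col W i \<bullet> col W j" using i j W by (simp add: row_transpose)
    also have "\<dots> = (ws ! i \<bullet> ws ! j) / (sqrt (ws ! i \<bullet> ws ! i) * sqrt (ws ! j \<bullet> ws ! j))"
      using wsn[OF i] wsn[OF j] by (simp add: colW i j)
    also have "\<dots> = 1\<^sub>m n $$ (i, j)"
      using orth[OF i j] pos[OF i] i j by (cases "i = j") (auto simp flip: real_sqrt_mult)
    finally show "(W\<^sup>T * W) $$ (i, j) = 1\<^sub>m n $$ (i, j)" .
  qed (use W in auto)
  moreover have "col W 0 = u" using colW[OF n] ws0 u1 by simp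
  ultimately show ?thesis using W by blast
qed

lemma mat_diag_Suc:
  "mat_diag (Suc m) ev =
     four_block_mat (mat 1 1 (\<lambda>_. ev 0)) (0\<^sub>m 1 m) (0\<^sub>m m 1) (mat_diag m (ev \<circ> Suc))"
  by (rule eq_matI) (auto simp: mat_diag_def)

lemma orthogonal_mult:
  fixes W B :: "'a :: comm_ring_1 mat"
  assumes W: "W \<in> carrier_mat n n" "W\<^sup>T * W = 1\<^sub>m n" and B: "B \<in> carrier_mat n n" "B\<^sup>T * B = 1\<^sub>m n"
  shows "(W * B)\<^sup>T * (W * B) = 1\<^sub>m n"
proof -
  have "(W * B)\<^sup>T * (W * B) = B\<^sup>T * (W\<^sup>T * (W * B))"
    using W B by (simp add: transpose_mult assoc_mult_mat[of _ n n _ n _ n])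
  also have "W\<^sup>T * (W * B) = (W\<^sup>T * W) * B"
    using W B by (intro assoc_mult_mat[symmetric]) auto
  finally show ?thesis using W B by simp
qed

lemma congruence_mult:
  fixes W B D :: "'a :: comm_ring_1 mat"
  assumes "W \<in> carrier_mat n n" "B \<in> carrier_mat n n" "D \<in> carrier_mat n n"
  shows "W * B * D * (W * B)\<^sup>T = W * (B * D * B\<^sup>T) * W\<^sup>T"
  using assms by (simp add: transpose_mult assoc_mult_mat[of _ n n _ n _ n])

lemma orthogonal_congruence_cancel:
  fixes W A :: "'a :: field mat"
  assumes W: "W \<in> carrier_mat n n" "W\<^sup>T * W = 1\<^sub>m n" and A: "A \<in> carrier_mat n n"
  shows "W * (W\<^sup>T * A * W) * W\<^sup>T = A"
proof -
  have "W * W\<^sup>T = 1\<^sub>m n" using mat_mult_left_right_inverse[of "W\<^sup>T" n W] W by simp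
  moreover have "W * (W\<^sup>T * A * W) * W\<^sup>T = (W * W\<^sup>T) * A * (W * W\<^sup>T)"
    using W A by (simp add: assoc_mult_mat[of _ n n _ n _ n])
  ultimately show ?thesis using A by simp
qed

lemma block_diag_mult:
  fixes A1 A2 D1 D2 :: "'a :: semiring_0 mat"
  assumes "A1 \<in> carrier_mat 1 1" "D1 \<in> carrier_mat m m" "A2 \<in> carrier_mat 1 1" "D2 \<in> carrier_mat m m"
  shows "four_block_mat A1 (0\<^sub>m 1 m) (0\<^sub>m m 1) D1 * four_block_mat A2 (0\<^sub>m 1 m) (0\<^sub>m m 1) D2
           = four_block_mat (A1 * A2) (0\<^sub>m 1 m) (0\<^sub>m m 1) (D1 * D2)"
  by (subst mult_four_block_mat[OF assms(1) zero_carrier_mat zero_carrier_mat assms(2)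
        assms(3) zero_carrier_mat zero_carrier_mat assms(4)]) (use assms in simp)

lemma orthogonal_block_diag_congruence:
  fixes P D E :: "'a :: comm_ring_1 mat"
  assumes P: "P \<in> carrier_mat m m" "P\<^sup>T * P = 1\<^sub>m m" and D: "D \<in> carrier_mat m m"
    and E: "E \<in> carrier_mat 1 1"
  defines "B \<equiv> four_block_mat (1\<^sub>m 1) (0\<^sub>m 1 m) (0\<^sub>m m 1) P"
  shows "B \<in> carrier_mat (Suc m) (Suc m)" and "B\<^sup>T * B = 1\<^sub>m (Suc m)"
    and "B * four_block_mat E (0\<^sub>m 1 m) (0\<^sub>m m 1) D * B\<^sup>T
           = four_block_mat E (0\<^sub>m 1 m) (0\<^sub>m m 1) (P * D * P\<^sup>T)"
proof -
  have PT: "P\<^sup>T \<in> carrier_mat m m" using P by simp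
  have BT: "B\<^sup>T = four_block_mat (1\<^sub>m 1) (0\<^sub>m 1 m) (0\<^sub>m m 1) P\<^sup>T"
    unfolding B_def using P by (subst transpose_four_block_mat) auto
  show "B \<in> carrier_mat (Suc m) (Suc m)" unfolding B_def using P by auto
  have "B\<^sup>T * B = four_block_mat (1\<^sub>m 1) (0\<^sub>m 1 m) (0\<^sub>m m 1) (1\<^sub>m m)"
    unfolding BT unfolding B_def using P by (subst block_diag_mult) auto
  then show "B\<^sup>T * B = 1\<^sub>m (Suc m)" by (auto intro!: eq_matI)
  show "B * four_block_mat E (0\<^sub>m 1 m) (0\<^sub>m m 1) D * B\<^sup>T
           = four_block_mat E (0\<^sub>m 1 m) (0\<^sub>m m 1) (P * D * P\<^sup>T)"
  proof -
    have BE: "B * four_block_mat E (0\<^sub>m 1 m) (0\<^sub>m m 1) D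
        = four_block_mat (1\<^sub>m 1 * E) (0\<^sub>m 1 m) (0\<^sub>m m 1) (P * D)"
      unfolding B_def using P D E by (intro block_diag_mult) auto
    show ?thesis unfolding BE BT using P PT D E by (subst block_diag_mult) auto
  qed
qed

lemma orthogonal_deflation:
  fixes A W :: "real mat"
  assumes A: "A \<in> carrier_mat (Suc m) (Suc m)" "A\<^sup>T = A"
    and W: "W \<in> carrier_mat (Suc m) (Suc m)" "W\<^sup>T * W = 1\<^sub>m (Suc m)"
    and eigen: "A *\<^sub>v col W 0 = e \<cdot>\<^sub>v col W 0"
  shows "\<exists>A3. A3 \<in> carrier_mat m m \<and> A3\<^sup>T = A3 \<and>
           W\<^sup>T * A * W = four_block_mat (mat 1 1 (\<lambda>_. e)) (0\<^sub>m 1 m) (0\<^sub>m m 1) A3"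
proof -
  define A' where "A' = W\<^sup>T * A * W"
  have A': "A' \<in> carrier_mat (Suc m) (Suc m)" unfolding A'_def using W A by simp
  have "A'\<^sup>T = W\<^sup>T * (W\<^sup>T * A)\<^sup>T"
    unfolding A'_def using A W by (subst transpose_mult[of _ "Suc m" "Suc m"]) auto
  also have "(W\<^sup>T * A)\<^sup>T = A * W"
    using A W by (subst transpose_mult[of _ "Suc m" "Suc m"]) auto
  finally have "A'\<^sup>T = A'"
    unfolding A'_def using A W by (simp add: assoc_mult_mat[of _ "Suc m" "Suc m" _ "Suc m" _ "Suc m"])
  then have A'_sym: "A' $$ (i, j) = A' $$ (j, i)" if "i < Suc m" "j < Suc m" for i j
    using that A' by (metis carrier_matD index_transpose_mat(1))
  have A'_col0: "A' $$ (i, 0) = (if i = 0 then e else 0)" if i: "i < Suc m" for i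
  proof -
    have "A' $$ (i, 0) = row (W\<^sup>T) i \<bullet> col (A * W) 0"
      unfolding A'_def using i W A
      by (simp add: assoc_mult_mat[of _ "Suc m" "Suc m" _ "Suc m" _ "Suc m"])
    also have "row (W\<^sup>T) i = col W i" using i W by simp
    also have "col (A * W) 0 = e \<cdot>\<^sub>v col W 0"
      using col_mult2[OF A(1) W(1), of 0] eigen by simp
    also have "col W i \<bullet> (e \<cdot>\<^sub>v col W 0) = e * (W\<^sup>T * W) $$ (i, 0)"
      using i W(1) by simp
    finally show ?thesis unfolding W(2) using i by simp
  qed
  define A3 where "A3 = mat m m (\<lambda>(i, j). A' $$ (Suc i, Suc j))"
  have "A' = four_block_mat (mat 1 1 (\<lambda>_. e)) (0\<^sub>m 1 m) (0\<^sub>m m 1) A3"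
  proof (rule eq_matI)
    fix i j assume "i < dim_row (four_block_mat (mat 1 1 (\<lambda>_. e)) (0\<^sub>m 1 m) (0\<^sub>m m 1) A3)"
      "j < dim_col (four_block_mat (mat 1 1 (\<lambda>_. e)) (0\<^sub>m 1 m) (0\<^sub>m m 1) A3)"
    then have i: "i < Suc m" and j: "j < Suc m" by (auto simp: A3_def)
    show "A' $$ (i, j) = four_block_mat (mat 1 1 (\<lambda>_. e)) (0\<^sub>m 1 m) (0\<^sub>m m 1) A3 $$ (i, j)"
    proof (cases "i = 0 \<or> j = 0")
      case True
      then show ?thesis using i j A'_col0 A'_sym[of 0 j] by (auto simp: A3_def)
    next
      case False
      then obtain i' j' where "i = Suc i'" "j = Suc j'" by (cases i; cases j) auto
      then show ?thesis using i j by (auto simp: A3_def)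
    qed
  qed (use A' in \<open>auto simp: A3_def\<close>)
  moreover have "A3\<^sup>T = A3" unfolding A3_def by (rule eq_matI) (auto simp: A'_sym)
  ultimately show ?thesis unfolding A'_def by (intro exI[of _ A3]) (auto simp: A3_def)
qed

lemma unit_eigenvector_exists:
  fixes A :: "real mat"
  assumes A: "A \<in> carrier_mat n n" and e: "eigenvalue A e"
  shows "\<exists>u. u \<in> carrier_vec n \<and> u \<bullet> u = 1 \<and> A *\<^sub>v u = e \<cdot>\<^sub>v u"
proof -
  obtain v where v: "v \<in> carrier_vec n" "v \<noteq> 0\<^sub>v n" "A *\<^sub>v v = e \<cdot>\<^sub>v v"
    using e A unfolding eigenvalue_def eigenvector_def by auto
  have vv: "v \<bullet> v > 0" using conjugate_square_greater_0_vec[OF v(1)] v(2) by simp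
  define u where "u = (1 / sqrt (v \<bullet> v)) \<cdot>\<^sub>v v"
  have "u \<bullet> u = 1" unfolding u_def using v(1) vv by simp
  moreover have "A *\<^sub>v u = e \<cdot>\<^sub>v u"
    unfolding u_def using v A by (simp add: mult_mat_vec smult_smult_assoc mult.commute)
  moreover have "u \<in> carrier_vec n" unfolding u_def using v(1) by simp
  ultimately show ?thesis by blast
qed

theorem real_symmetric_spectral:
  fixes A :: "real mat"
  assumes "A \<in> carrier_mat n n" "A\<^sup>T = A"
  shows "\<exists>P ev. P \<in> carrier_mat n n \<and> P\<^sup>T * P = 1\<^sub>m n \<and> A = P * mat_diag n ev * P\<^sup>T"
  using assms
proof (induction n arbitrary: A)
  case 0
  then show ?case by (intro exI[of _ "1\<^sub>m 0"]) (auto intro!: eq_matI)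
next
  case (Suc m A)
  obtain e where "eigenvalue A e" using real_symmetric_has_eigenvalue Suc.prems by blast
  then obtain u where u: "u \<in> carrier_vec (Suc m)" "u \<bullet> u = 1" "A *\<^sub>v u = e \<cdot>\<^sub>v u"
    using unit_eigenvector_exists Suc.prems(1) by blast
  obtain W where W: "W \<in> carrier_mat (Suc m) (Suc m)" "W\<^sup>T * W = 1\<^sub>m (Suc m)" "col W 0 = u"
    using orthonormal_completion[OF u(1,2)] by blast
  obtain A3 where A3: "A3 \<in> carrier_mat m m" "A3\<^sup>T = A3"
    and block: "W\<^sup>T * A * W = four_block_mat (mat 1 1 (\<lambda>_. e)) (0\<^sub>m 1 m) (0\<^sub>m m 1) A3"
    using orthogonal_deflation[OF Suc.prems W(1,2)] u(3) W(3) by blast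
  obtain P3 ev3 where P3: "P3 \<in> carrier_mat m m" "P3\<^sup>T * P3 = 1\<^sub>m m"
    and A3_diag: "A3 = P3 * mat_diag m ev3 * P3\<^sup>T"
    using Suc.IH[OF A3] by blast
  define B where "B = four_block_mat (1\<^sub>m 1) (0\<^sub>m 1 m) (0\<^sub>m m 1) P3"
  define ev where "ev = case_nat e ev3"
  note B = orthogonal_block_diag_congruence[OF P3 mat_diag_dim[of m ev3] mat_carrier[of 1 1 "\<lambda>_. e"],
      folded B_def]
  have D: "mat_diag (Suc m) ev \<in> carrier_mat (Suc m) (Suc m)" by simp
  have "A = W * (W\<^sup>T * A * W) * W\<^sup>T"
    using orthogonal_congruence_cancel[OF W(1,2) Suc.prems(1)] by simp
  also have "\<dots> = W * (B * mat_diag (Suc m) ev * B\<^sup>T) * W\<^sup>T"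
    unfolding block A3_diag mat_diag_Suc B(3)[symmetric] by (simp add: ev_def o_def)
  also have "\<dots> = W * B * mat_diag (Suc m) ev * (W * B)\<^sup>T"
    using congruence_mult[OF W(1) B(1) D] by simp
  finally show ?case
    using W B orthogonal_mult[OF W(1,2) B(1,2)] by (intro exI[of _ "W * B"] exI[of _ ev]) auto
qed

section \<open>The expander mixing lemma\<close>

lemma orthonormal_parseval:
  fixes p :: "nat \<Rightarrow> nat \<Rightarrow> real"
  assumes orth: "\<And>i j. i < n \<Longrightarrow> j < n \<Longrightarrow> (\<Sum>k<n. p k i * p k j) = (if i = j then 1 else 0)"
    and S: "S \<subseteq> {..<n}"
  shows "(\<Sum>k<n. (\<Sum>i\<in>S. p k i) * (\<Sum>i\<in>S. p k i)) = card S"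
proof -
  have "(\<Sum>k<n. (\<Sum>i\<in>S. p k i) * (\<Sum>i\<in>S. p k i)) = (\<Sum>i\<in>S. \<Sum>i'\<in>S. \<Sum>k<n. p k i * p k i')"
    unfolding sum_product by (subst sum.swap) (simp add: sum.swap[of _ "{..<n}"])
  also have "\<dots> = (\<Sum>i\<in>S. \<Sum>i'\<in>S. if i = i' then 1 else 0)"
    by (intro sum.cong refl orth) (use S in auto)
  also have "\<dots> = card S" using finite_subset[OF S] by simp
  finally show ?thesis .
qed

lemma orthonormal_mixing:
  fixes a p :: "nat \<Rightarrow> nat \<Rightarrow> real" and ev :: "nat \<Rightarrow> real"
  assumes spec: "\<And>i j. i < n \<Longrightarrow> j < n \<Longrightarrow> a i j = (\<Sum>k<n. ev k * p k i * p k j)"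
    and orth: "\<And>i j. i < n \<Longrightarrow> j < n \<Longrightarrow> (\<Sum>k<n. p k i * p k j) = (if i = j then 1 else 0)"
    and k0: "k0 < n" and w: "w * w = real n" and ones: "\<And>i. i < n \<Longrightarrow> p k0 i * w = 1"
    and ev_k0: "ev k0 = d"
    and gap: "\<And>k. k < n \<Longrightarrow> k \<noteq> k0 \<Longrightarrow> \<bar>ev k\<bar> \<le> lam" and lam: "lam \<ge> 0"
    and S: "S \<subseteq> {..<n}" and T: "T \<subseteq> {..<n}"
  shows "\<bar>(\<Sum>i\<in>S. \<Sum>j\<in>T. a i j) - d * card S * card T / n\<bar> \<le> lam * (real (card S) + card T) / 2"
proof -
  define u where "u k = (\<Sum>i\<in>S. p k i)" for k
  define v where "v k = (\<Sum>j\<in>T. p k j)" for k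
  have "(\<Sum>i\<in>S. \<Sum>j\<in>T. a i j) = (\<Sum>i\<in>S. \<Sum>j\<in>T. \<Sum>k<n. ev k * p k i * p k j)"
    by (intro sum.cong refl spec) (use S T in auto)
  also have "\<dots> = (\<Sum>k<n. \<Sum>i\<in>S. \<Sum>j\<in>T. ev k * p k i * p k j)"
    by (subst sum.swap) (simp add: sum.swap[of _ "{..<n}"])
  also have "\<dots> = (\<Sum>k<n. ev k * (u k * v k))"
    unfolding u_def v_def sum_product by (simp add: sum_distrib_left mult.assoc)
  also have "\<dots> = ev k0 * (u k0 * v k0) + (\<Sum>k\<in>{..<n}-{k0}. ev k * (u k * v k))"
    using k0 by (simp add: sum.remove)
  finally have split: "(\<Sum>i\<in>S. \<Sum>j\<in>T. a i j) = ev k0 * (u k0 * v k0) + (\<Sum>k\<in>{..<n}-{k0}. ev k * (u k * v k))" .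
  have sum_ones: "(\<Sum>i\<in>R. p k0 i) * w = card R" if "R \<subseteq> {..<n}" for R
    using that ones unfolding sum_distrib_right by (simp add: subset_eq)
  have "u k0 * w = card S" "v k0 * w = card T"
    unfolding u_def v_def using sum_ones S T by auto
  then have "ev k0 * (u k0 * v k0) * (w * w) = d * card S * card T"
    using ev_k0 by (simp add: algebra_simps)
  then have main: "ev k0 * (u k0 * v k0) = d * card S * card T / n"
    using w k0 by (simp add: field_simps)
  have "\<bar>\<Sum>k\<in>{..<n}-{k0}. ev k * (u k * v k)\<bar> \<le> (\<Sum>k\<in>{..<n}-{k0}. lam * ((u k * u k + v k * v k) / 2))"
  proof (rule order_trans[OF sum_abs sum_mono])
    fix k assume k: "k \<in> {..<n}-{k0}"
    have "\<bar>u k * v k\<bar> \<le> (u k * u k + v k * v k) / 2"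
      using sum_squares_ge_zero[of "u k - v k" 0] sum_squares_ge_zero[of "u k + v k" 0]
      by (auto simp: abs_if algebra_simps)
    then show "\<bar>ev k * (u k * v k)\<bar> \<le> lam * ((u k * u k + v k * v k) / 2)"
      using gap[of k] k lam unfolding abs_mult mult.assoc
      by (intro mult_mono) auto
  qed
  also have "\<dots> \<le> (\<Sum>k<n. lam * ((u k * u k + v k * v k) / 2))"
    using lam by (intro sum_mono2) auto
  also have "\<dots> = lam * (real (card S) + card T) / 2"
    using orthonormal_parseval[OF orth S] orthonormal_parseval[OF orth T]
    by (simp add: u_def v_def sum_distrib_left[symmetric] sum_divide_distrib[symmetric] sum.distrib)
  finally show ?thesis unfolding split main by simp
qed

lemma index_orthogonal_diag:
  fixes P :: "real mat"
  assumes P: "P \<in> carrier_mat n n" and i: "i < n" and j: "j < n"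
  shows "(P * mat_diag n ev * P\<^sup>T) $$ (i, j) = (\<Sum>k<n. ev k * P $$ (i, k) * P $$ (j, k))"
  using P i j by (simp add: mat_diag_mult_right scalar_prod_def lessThan_atLeast0 mult.commute mult.left_commute)

lemma orthogonal_mat_rows:
  fixes P :: "real mat"
  assumes P: "P \<in> carrier_mat n n" "P\<^sup>T * P = 1\<^sub>m n" and i: "i < n" and j: "j < n"
  shows "(\<Sum>k<n. P $$ (i, k) * P $$ (j, k)) = (if i = j then 1 else 0)"
proof -
  have "P * P\<^sup>T = 1\<^sub>m n" using mat_mult_left_right_inverse[of "P\<^sup>T" n P] P by simp
  then have "(P * P\<^sup>T) $$ (i, j) = (if i = j then 1 else 0)" using i j by simp
  then show ?thesis using P i j by (simp add: scalar_prod_def lessThan_atLeast0)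
qed

lemma orthogonal_mat_cols:
  fixes P :: "real mat"
  assumes P: "P \<in> carrier_mat n n" "P\<^sup>T * P = 1\<^sub>m n" and k: "k < n" and l: "l < n"
  shows "(\<Sum>i<n. P $$ (i, k) * P $$ (i, l)) = (if k = l then 1 else 0)"
proof -
  have "(\<Sum>i<n. P $$ (i, k) * P $$ (i, l)) = (P\<^sup>T * P) $$ (k, l)"
    using P(1) k l by (simp add: scalar_prod_def lessThan_atLeast0)
  then show ?thesis using P(2) k l by simp
qed

lemma proots_prod_linear: "proots (\<Prod>a\<leftarrow>xs. [:- a, 1:]) = mset (xs :: 'a :: idom list)"
proof (induction xs)
  case (Cons a xs)
  have "(\<Prod>a\<leftarrow>xs. [:- a, 1:]) \<noteq> 0" by (auto simp: prod_list_zero_iff)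
  then have "proots ([:- a, 1:] * (\<Prod>a\<leftarrow>xs. [:- a, 1:])) = proots [:- a, 1:] + proots (\<Prod>a\<leftarrow>xs. [:- a, 1:])"
    by (intro proots_mult) auto
  then show ?case using Cons.IH by (simp add: proots_linear_factor)
qed simp

lemma proots_char_poly_orthogonal_diag:
  fixes P :: "real mat"
  assumes P: "P \<in> carrier_mat n n" "P\<^sup>T * P = 1\<^sub>m n"
  shows "proots (char_poly (P * mat_diag n ev * P\<^sup>T)) = mset (map ev [0..<n])"
proof -
  have PT: "P\<^sup>T \<in> carrier_mat n n" using P by simp
  have "P * P\<^sup>T = 1\<^sub>m n" using mat_mult_left_right_inverse[OF PT P(1,2)] .
  then have "similar_mat (P * mat_diag n ev * P\<^sup>T) (mat_diag n ev)"
    unfolding similar_mat_def using P PT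
    by (intro exI[of _ P] exI[of _ "P\<^sup>T"] similar_mat_witI) auto
  then have "char_poly (P * mat_diag n ev * P\<^sup>T) = char_poly (mat_diag n ev)"
    by (rule char_poly_similar)
  also have "\<dots> = (\<Prod>a\<leftarrow>diag_mat (mat_diag n ev). [:- a, 1:])"
    by (rule char_poly_upper_triangular[OF mat_diag_dim]) (auto simp: upper_triangular_def mat_diag_def)
  also have "diag_mat (mat_diag n ev) = map ev [0..<n]"
    by (rule nth_equalityI) (auto simp: diag_mat_def mat_diag_def)
  finally show ?thesis by (simp only: proots_prod_linear)
qed

lemma sorted_desc_abs_bound:
  fixes xs :: "real list"
  defines "L \<equiv> rev (sort xs)"
  assumes "k < length L" "0 < k"
  shows "\<bar>L ! k\<bar> \<le> max \<bar>L ! 1\<bar> \<bar>L ! (length xs - 1)\<bar>"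
proof -
  have mono: "L ! j \<le> L ! i" if "i \<le> j" "j < length xs" for i j
    using that sorted_nth_mono[OF sorted_sort, of "length xs - Suc j" "length xs - Suc i" xs]
    unfolding L_def by (simp add: rev_nth)
  have "L ! k \<le> L ! 1" "L ! (length xs - 1) \<le> L ! k"
    using mono[of 1 k] mono[of k "length xs - 1"] assms by (auto simp: L_def)
  then show ?thesis by arith
qed

lemma abs_bound_all_but_one:
  fixes xs :: "real list"
  defines "L \<equiv> rev (sort xs)"
  defines "g \<equiv> max \<bar>L ! 1\<bar> \<bar>L ! (length xs - 1)\<bar>"
  assumes i: "i < length xs" and j: "j < length xs" and ij: "i \<noteq> j" and big: "\<bar>xs ! i\<bar> > g"
  shows "\<bar>xs ! j\<bar> \<le> g"
proof (rule ccontr)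
  define big where "big x \<longleftrightarrow> g < \<bar>x\<bar>" for x
  assume "\<not> \<bar>xs ! j\<bar> \<le> g"
  then have "{i, j} \<subseteq> {k. k < length xs \<and> big (xs ! k)}" using i j big by (auto simp: big_def)
  then have "2 \<le> length (filter big xs)"
    using ij card_mono[of "{k. k < length xs \<and> big (xs ! k)}" "{i, j}"] by (simp add: length_filter_conv_card)
  also have "length (filter big xs) = length (filter big L)"
    unfolding L_def by (metis mset_filter mset_rev mset_sort size_mset)
  finally have "2 \<le> length (filter big L)" .
  moreover have "{k. k < length L \<and> big (L ! k)} \<subseteq> {0}"
  proof
    fix k assume "k \<in> {k. k < length L \<and> big (L ! k)}"
    then show "k \<in> {0}"
      using sorted_desc_abs_bound[of k xs] unfolding big_def g_def L_def by (cases k) (auto simp: max_def split: if_splits)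
  qed
  then have "card {k. k < length L \<and> big (L ! k)} \<le> card {0 :: nat}" by (intro card_mono) auto
  then have "length (filter big L) \<le> 1" by (simp add: length_filter_conv_card)
  ultimately show False by simp
qed

text \<open>If all row sums of \<open>a\<close> equal \<open>d\<close> and the eigenvalue \<open>d\<close> is simple, the normalised all-ones vector
  is one of the orthonormal eigenvectors: each eigenvector not orthogonal to the all-ones vector
  has eigenvalue \<open>d\<close>.\<close>
lemma regular_ones_eigenvector:
  fixes a p :: "nat \<Rightarrow> nat \<Rightarrow> real" and ev :: "nat \<Rightarrow> real"
  assumes spec: "\<And>i j. i < n \<Longrightarrow> j < n \<Longrightarrow> a i j = (\<Sum>k<n. ev k * p k i * p k j)"
    and rows: "\<And>i j. i < n \<Longrightarrow> j < n \<Longrightarrow> (\<Sum>k<n. p k i * p k j) = (if i = j then 1 else 0)"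
    and cols: "\<And>k l. k < n \<Longrightarrow> l < n \<Longrightarrow> (\<Sum>i<n. p k i * p l i) = (if k = l then 1 else 0)"
    and deg: "\<And>i. i < n \<Longrightarrow> (\<Sum>j<n. a i j) = d"
    and simple: "\<And>k l. k < n \<Longrightarrow> l < n \<Longrightarrow> ev k = d \<Longrightarrow> ev l = d \<Longrightarrow> k = l"
    and n: "n > 0"
  obtains k0 w where "k0 < n" "ev k0 = d" "w * w = real n" "\<And>i. i < n \<Longrightarrow> p k0 i * w = 1"
proof -
  define w where "w l = (\<Sum>i<n. p l i)" for l
  have proj: "(\<Sum>i<n. p l i * a i j) = ev l * p l j" if l: "l < n" and j: "j < n" for l j
  proof -
    have "(\<Sum>i<n. p l i * a i j) = (\<Sum>i<n. \<Sum>k<n. ev k * p k j * (p l i * p k i))"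
      using j by (simp add: spec sum_distrib_left mult_ac)
    also have "\<dots> = (\<Sum>k<n. ev k * p k j * (\<Sum>i<n. p l i * p k i))"
      by (subst sum.swap) (simp add: sum_distrib_left)
    also have "\<dots> = ev l * p l j" using l by (simp add: cols if_distrib cong: if_cong)
    finally show ?thesis .
  qed
  have ev_w: "ev l * w l = d * w l" if l: "l < n" for l
  proof -
    have "ev l * w l = (\<Sum>j<n. \<Sum>i<n. p l i * a i j)"
      unfolding w_def sum_distrib_left by (simp add: proj l)
    also have "\<dots> = (\<Sum>i<n. p l i * (\<Sum>j<n. a i j))"
      by (subst sum.swap) (simp add: sum_distrib_left)
    finally show ?thesis by (simp add: deg w_def sum_distrib_left mult.commute)
  qed
  have ww: "(\<Sum>l<n. w l * w l) = n"
    using orthonormal_parseval[OF rows, of "{..<n}"] by (simp add: w_def)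
  have "\<exists>k0<n. w k0 \<noteq> 0"
  proof (rule ccontr)
    assume "\<not> ?thesis"
    then have "(\<Sum>l<n. w l * w l) = 0" by simp
    then show False using ww n by simp
  qed
  then obtain k0 where k0: "k0 < n" "w k0 \<noteq> 0" by blast
  then have ev_k0: "ev k0 = d" using ev_w[OF k0(1)] by simp
  have w_other: "w k = 0" if "k < n" "k \<noteq> k0" for k
    using ev_w[of k] simple[of k k0] that k0 ev_k0 by auto
  have sum_k0: "(\<Sum>k<n. f k * w k) = f k0 * w k0" for f :: "nat \<Rightarrow> real"
    using k0 w_other by (subst sum.remove[of _ k0]) (auto intro!: sum.neutral)
  have "w k0 * w k0 = n" using ww sum_k0[of w] by simp
  moreover have "p k0 i * w k0 = 1" if i: "i < n" for i
  proof -
    have "(\<Sum>k<n. p k i * w k) = (\<Sum>j<n. \<Sum>k<n. p k i * p k j)"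
      unfolding w_def sum_distrib_left by (rule sum.swap)
    also have "\<dots> = 1" using i by (simp add: rows)
    finally show ?thesis using sum_k0[of "\<lambda>k. p k i"] by simp
  qed
  ultimately show ?thesis using that[of k0 "w k0"] k0(1) ev_k0 by blast
qed

lemma regular_row_sum:
  assumes "regular n E d" "i < n"
  shows "(\<Sum>j<n. if E i j then 1 else 0 :: real) = d"
proof -
  have "(\<Sum>j<n. if E i j then 1 else 0 :: real) = card ({..<n} \<inter> {j. E i j})"
    by (simp add: sum.If_cases)
  also have "{..<n} \<inter> {j. E i j} = {u. u < n \<and> E i u}" by auto
  finally show ?thesis using assms unfolding regular_def by simp
qed

theorem expander_mixing:
  fixes E :: "nat \<Rightarrow> nat \<Rightarrow> bool" and S T :: "nat set"
  assumes G: "ndl_graph n d lam E" and gap: "lam < d" and S: "S \<subseteq> {..<n}" and T: "T \<subseteq> {..<n}"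
  shows "\<bar>(\<Sum>i\<in>S. \<Sum>j\<in>T. if E i j then 1 else 0 :: real) - real d * card S * card T / n\<bar>
           \<le> lam * (real (card S) + card T) / 2"
proof (cases "n = 0")
  case True
  then show ?thesis using S T by simp
next
  case False
  have sg: "simple_graph n E" and reg: "regular n E d" and g_lam: "graph_lambda n E \<le> lam"
    using G unfolding ndl_graph_def by auto
  define A where "A = adj_matrix n E"
  have A: "A \<in> carrier_mat n n" "A\<^sup>T = A"
    using sg unfolding A_def adj_matrix_def simple_graph_def by (auto intro!: eq_matI)
  obtain P ev where P: "P \<in> carrier_mat n n" "P\<^sup>T * P = 1\<^sub>m n" and A_diag: "A = P * mat_diag n ev * P\<^sup>T"
    using real_symmetric_spectral[OF A] by blast
  define p where "p k i = P $$ (i, k)" for k i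
  have spec: "(if E i j then 1 else 0) = (\<Sum>k<n. ev k * p k i * p k j)" if "i < n" "j < n" for i j
    using index_orthogonal_diag[OF P(1) that, of ev] that
    unfolding A_diag[symmetric] p_def A_def adj_matrix_def by simp
  note rows = orthogonal_mat_rows[OF P, folded p_def]
  note cols = orthogonal_mat_cols[OF P, folded p_def]
  define g where "g = graph_lambda n E"
  have eigs: "eigs n E = rev (sort (map ev [0..<n]))"
    unfolding eigs_def A_def[symmetric] A_diag proots_char_poly_orthogonal_diag[OF P]
      sorted_list_of_multiset_mset ..
  have g_bound: "\<bar>ev k\<bar> \<le> g" if "k < n" "l < n" "k \<noteq> l" "\<bar>ev l\<bar> > g" for k l
    using abs_bound_all_but_one[of l "map ev [0..<n]" k] that
    unfolding g_def graph_lambda_def eigs by simp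
  have g_d: "g < d" using g_lam gap unfolding g_def by simp
  have "0 \<le> g" unfolding g_def graph_lambda_def by simp
  obtain k0 w where k0: "k0 < n" "ev k0 = d" and w: "w * w = real n" "\<And>i. i < n \<Longrightarrow> p k0 i * w = 1"
  proof (rule regular_ones_eigenvector[OF spec rows cols regular_row_sum[OF reg]])
    show "k = l" if "k < n" "l < n" "ev k = d" "ev l = d" for k l
      using g_bound[of k l] that g_d by force
  qed (use False in auto)
  have "\<bar>(\<Sum>i\<in>S. \<Sum>j\<in>T. if E i j then 1 else 0 :: real) - real d * card S * card T / n\<bar>
      \<le> g * (real (card S) + card T) / 2"
    by (rule orthonormal_mixing[OF spec rows k0(1) w k0(2) g_bound _ S T])
      (use k0 g_d \<open>0 \<le> g\<close> in auto)
  also have "\<dots> \<le> lam * (real (card S) + card T) / 2"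
    using g_lam unfolding g_def by (simp add: divide_right_mono mult_right_mono)
  finally show ?thesis .
qed

section \<open>An Ore-type criterion for \<open>f\<close>-factors of bipartite graphs\<close>

definition alternating_path :: "('a \<times> 'a) set \<Rightarrow> ('a \<times> 'a) set \<Rightarrow> 'a list \<Rightarrow> bool" where
  "alternating_path H S vs \<longleftrightarrow> vs \<noteq> [] \<and> distinct vs \<and>
     (\<forall>i. Suc i < length vs \<longrightarrow>
        (if even i then (vs ! i, vs ! Suc i) \<in> H - S else (vs ! Suc i, vs ! i) \<in> S))"

definition path_new_edges :: "'a list \<Rightarrow> ('a \<times> 'a) set" where
  "path_new_edges vs = {(vs ! i, vs ! Suc i) | i. Suc i < length vs \<and> even i}"

definition path_old_edges :: "'a list \<Rightarrow> ('a \<times> 'a) set" where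
  "path_old_edges vs = {(vs ! Suc i, vs ! i) | i. Suc i < length vs \<and> odd i}"

lemma alternating_path_take:
  assumes "alternating_path H S vs" "0 < k"
  shows "alternating_path H S (take k vs)"
  using assms unfolding alternating_path_def by auto

lemma alternating_path_snoc:
  assumes vs: "alternating_path H S vs" and z: "z \<notin> set vs"
    and step: "if odd (length vs) then (last vs, z) \<in> H - S else (z, last vs) \<in> S"
  shows "alternating_path H S (vs @ [z])"
  unfolding alternating_path_def
proof (intro conjI allI impI)
  show "distinct (vs @ [z])" using vs z unfolding alternating_path_def by simp
  fix i assume i: "Suc i < length (vs @ [z])"
  show "if even i then ((vs @ [z]) ! i, (vs @ [z]) ! Suc i) \<in> H - S
        else ((vs @ [z]) ! Suc i, (vs @ [z]) ! i) \<in> S"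
  proof (cases "Suc i < length vs")
    case True
    then show ?thesis using vs unfolding alternating_path_def by (auto simp: nth_append)
  next
    case False
    with i have "i = length vs - 1" "vs \<noteq> []" by auto
    then show ?thesis using step by (auto simp: nth_append last_conv_nth)
  qed
qed simp

lemma alternating_path_converse:
  assumes vs: "alternating_path H S vs" and even: "even (length vs)"
  shows "alternating_path (H\<inverse>) (S\<inverse>) (rev vs)"
  unfolding alternating_path_def
proof (intro conjI allI impI)
  show "rev vs \<noteq> []" "distinct (rev vs)" using vs unfolding alternating_path_def by auto
  fix i assume i: "Suc i < length (rev vs)"
  define j where "j = length vs - Suc (Suc i)"
  have j: "Suc j < length vs" "rev vs ! i = vs ! Suc j" "rev vs ! Suc i = vs ! j" "even i \<longleftrightarrow> even j"
    using i even by (auto simp: j_def rev_nth Suc_diff_Suc)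
  show "if even i then (rev vs ! i, rev vs ! Suc i) \<in> H\<inverse> - S\<inverse> else (rev vs ! Suc i, rev vs ! i) \<in> S\<inverse>"
    using vs j unfolding alternating_path_def by auto
qed

lemma rev_path_steps:
  assumes P: "\<And>i. Suc i < length vs \<Longrightarrow> P (length vs - Suc (Suc i)) = P i"
  shows "{(rev vs ! i, rev vs ! Suc i) | i. Suc i < length vs \<and> P i}
           = {(vs ! Suc j, vs ! j) | j. Suc j < length vs \<and> P j}"
proof -
  define r where "r i = length vs - Suc (Suc i)" for i
  have r: "rev vs ! i = vs ! Suc (r i)" "rev vs ! Suc i = vs ! r i" "Suc (r i) < length vs"
      "r (r i) = i" "P (r i) = P i" if "Suc i < length vs" for i
    using that P[of i] by (auto simp: r_def rev_nth Suc_diff_Suc)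
  show ?thesis
  proof (intro Set.set_eqI iffI)
    fix e assume "e \<in> {(rev vs ! i, rev vs ! Suc i) | i. Suc i < length vs \<and> P i}"
    then obtain i where "Suc i < length vs" "P i" "e = (rev vs ! i, rev vs ! Suc i)" by blast
    then show "e \<in> {(vs ! Suc j, vs ! j) | j. Suc j < length vs \<and> P j}"
      using r[of i] by (intro CollectI exI[of _ "r i"]) auto
  next
    fix e assume "e \<in> {(vs ! Suc j, vs ! j) | j. Suc j < length vs \<and> P j}"
    then obtain j where "Suc j < length vs" "P j" "e = (vs ! Suc j, vs ! j)" by blast
    then show "e \<in> {(rev vs ! i, rev vs ! Suc i) | i. Suc i < length vs \<and> P i}"
      using r[of j] r[of "r j"] by (intro CollectI exI[of _ "r j"]) auto
  qed
qed

lemma path_edges_rev: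
  assumes "even (length vs)"
  shows "path_new_edges (rev vs) = (path_new_edges vs)\<inverse>"
    and "path_old_edges (rev vs) = (path_old_edges vs)\<inverse>"
proof -
  have parity: "even (length vs - Suc (Suc i)) = even i" if "Suc i < length vs" for i
    using that assms by auto
  show "path_new_edges (rev vs) = (path_new_edges vs)\<inverse>"
    using rev_path_steps[of vs even] parity unfolding path_new_edges_def by auto
  show "path_old_edges (rev vs) = (path_old_edges vs)\<inverse>"
    using rev_path_steps[of vs odd] parity unfolding path_old_edges_def by auto
qed

lemma path_new_edges_Image:
  assumes "distinct vs" "j < length vs"
  shows "path_new_edges vs `` {vs ! j} = (if even j \<and> Suc j < length vs then {vs ! Suc j} else {})"
  using assms unfolding path_new_edges_def by (auto simp: nth_eq_iff_index_eq)

lemma path_old_edges_Image: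
  assumes "distinct vs" "j < length vs"
  shows "path_old_edges vs `` {vs ! j} = (if even j \<and> 0 < j then {vs ! (j - 1)} else {})"
proof (intro Set.set_eqI)
  fix u
  have "u \<in> path_old_edges vs `` {vs ! j} \<longleftrightarrow> (\<exists>i. Suc i = j \<and> odd i \<and> u = vs ! i)"
    using assms unfolding path_old_edges_def by (auto simp: nth_eq_iff_index_eq)
  also have "\<dots> \<longleftrightarrow> u \<in> (if even j \<and> 0 < j then {vs ! (j - 1)} else {})"
    by (cases j) auto
  finally show "u \<in> path_old_edges vs `` {vs ! j} \<longleftrightarrow> u \<in> (if even j \<and> 0 < j then {vs ! (j - 1)} else {})" .
qed

lemma path_edges_Image_notin:
  assumes "x \<notin> set vs"
  shows "path_new_edges vs `` {x} = {}" "path_old_edges vs `` {x} = {}"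
  using assms unfolding path_new_edges_def path_old_edges_def by (auto dest: nth_mem)

lemma card_remove_add_one:
  assumes "finite N" "R \<subseteq> N" "a \<notin> N"
  shows "card ((N - R) \<union> {a}) = card N - card R + 1"
  using assms by (simp add: card_Diff_subset finite_subset)

definition augment :: "('a \<times> 'a) set \<Rightarrow> 'a list \<Rightarrow> ('a \<times> 'a) set" where
  "augment S vs = (S - path_old_edges vs) \<union> path_new_edges vs"

locale bipartite_subgraph =
  fixes X Y :: "'a set" and H S :: "('a \<times> 'a) set"
  assumes finite_X: "finite X" and finite_Y: "finite Y" and disjoint: "X \<inter> Y = {}"
    and H_sub: "H \<subseteq> X \<times> Y" and S_sub: "S \<subseteq> H"
begin

lemma finite_H: "finite H"
  using finite_subset[OF H_sub] finite_X finite_Y by blast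

lemma finite_S: "finite S"
  using finite_subset[OF S_sub finite_H] .

lemma converse: "bipartite_subgraph Y X (H\<inverse>) (S\<inverse>)"
  using finite_X finite_Y H_sub S_sub disjoint by unfold_locales auto

lemma alternating_path_side:
  assumes vs: "alternating_path H S vs" and start: "vs ! 0 \<in> X" and i: "i < length vs"
  shows "vs ! i \<in> X \<longleftrightarrow> even i" and "vs ! i \<in> Y \<longleftrightarrow> odd i"
proof -
  have "vs ! i \<in> (if even i then X else Y)"
    using i
  proof (induction i)
    case (Suc i)
    then have "if even i then (vs ! i, vs ! Suc i) \<in> H - S else (vs ! Suc i, vs ! i) \<in> S"
      using vs unfolding alternating_path_def by auto
    then show ?case using H_sub S_sub by (auto split: if_splits)
  qed (use start in simp)
  then show "vs ! i \<in> X \<longleftrightarrow> even i" "vs ! i \<in> Y \<longleftrightarrow> odd i"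
    using disjoint by (auto split: if_splits)
qed

lemma augment_subset:
  assumes "alternating_path H S vs"
  shows "augment S vs \<subseteq> H"
  using assms S_sub unfolding augment_def path_new_edges_def alternating_path_def by auto

lemma augment_out_degree:
  assumes vs: "alternating_path H S vs" and start: "vs ! 0 \<in> X" and stop: "last vs \<in> Y"
    and x: "x \<in> X"
  shows "card (augment S vs `` {x}) = card (S `` {x}) + (if x = vs ! 0 then 1 else 0)"
proof -
  have ne: "vs \<noteq> []" and dist: "distinct vs" using vs unfolding alternating_path_def by auto
  have fin: "finite (S `` {x})" using finite_S by (rule finite_Image)
  have odd_last: "odd (length vs - 1)"
    using alternating_path_side(2)[OF vs start, of "length vs - 1"] stop ne by (simp add: last_conv_nth)
  have Image_eq: "augment S vs `` {x} = (S `` {x} - path_old_edges vs `` {x}) \<union> path_new_edges vs `` {x}"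
    unfolding augment_def by auto
  show ?thesis
  proof (cases "x \<in> set vs")
    case False
    then have "x \<noteq> vs ! 0" using ne by (metis nth_mem length_greater_0_conv)
    then show ?thesis unfolding Image_eq path_edges_Image_notin[OF False] by simp
  next
    case True
    then obtain j where j: "j < length vs" "x = vs ! j" by (auto simp: in_set_conv_nth)
    have even_j: "even j" using alternating_path_side(1)[OF vs start j(1)] j(2) x by simp
    then have Suc_j: "Suc j < length vs" using j(1) odd_last by presburger
    have step: "(vs ! j, vs ! Suc j) \<in> H - S"
      using vs Suc_j even_j unfolding alternating_path_def by auto
    have prev: "(vs ! j, vs ! (j - 1)) \<in> S" if "0 < j"
      using vs that j(1) even_j unfolding alternating_path_def
      by (cases j) (auto elim: allE[of _ "j - 1"])
    have first: "x = vs ! 0 \<longleftrightarrow> j = 0" using j ne dist by (simp add: nth_eq_iff_index_eq)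
    have "card (augment S vs `` {x})
        = card ((S `` {x} - path_old_edges vs `` {x}) \<union> {vs ! Suc j})"
      unfolding Image_eq unfolding j(2) path_new_edges_Image[OF dist j(1)] using even_j Suc_j by simp
    also have "\<dots> = card (S `` {x}) - card (path_old_edges vs `` {x}) + 1"
      using step prev j(2) fin
      by (intro card_remove_add_one) (auto simp: path_old_edges_Image[OF dist j(1)] even_j)
    also have "\<dots> = card (S `` {x}) + (if x = vs ! 0 then 1 else 0)"
    proof (cases "j = 0")
      case False
      then have "S `` {x} \<noteq> {}" using prev j(2) by blast
      then show ?thesis using False fin first j(2) even_j
        by (simp add: path_old_edges_Image[OF dist j(1)] card_gt_0_iff Suc_leI)
    qed (use path_old_edges_Image[OF dist j(1)] j(2) in simp)
    finally show ?thesis .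
  qed
qed

lemma augment_in_degree:
  assumes vs: "alternating_path H S vs" and start: "vs ! 0 \<in> X" and stop: "last vs \<in> Y"
    and y: "y \<in> Y"
  shows "card ((augment S vs)\<inverse> `` {y}) = card (S\<inverse> `` {y}) + (if y = last vs then 1 else 0)"
proof -
  interpret conv: bipartite_subgraph Y X "H\<inverse>" "S\<inverse>" by (rule converse)
  have ne: "vs \<noteq> []" using vs unfolding alternating_path_def by auto
  have "odd (length vs - 1)"
    using alternating_path_side(2)[OF vs start, of "length vs - 1"] stop ne by (simp add: last_conv_nth)
  then have even: "even (length vs)" using ne by (cases "length vs") auto
  have "(augment S vs)\<inverse> = augment (S\<inverse>) (rev vs)"
    unfolding augment_def path_edges_rev[OF even] by auto
  moreover have "rev vs ! 0 = last vs" "last (rev vs) = vs ! 0"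
    using ne by (auto simp: rev_nth last_conv_nth hd_conv_nth)
  ultimately show ?thesis
    using conv.augment_out_degree[OF alternating_path_converse[OF vs even]] start stop y by simp
qed

end

lemma card_edges_from:
  assumes "finite T" "finite A"
  shows "card (T \<inter> A \<times> UNIV) = (\<Sum>x\<in>A. card (T `` {x}))"
proof -
  have "T \<inter> A \<times> UNIV = (\<Union>x\<in>A. Pair x ` (T `` {x}))" by auto
  moreover have "card (\<Union>x\<in>A. Pair x ` (T `` {x})) = (\<Sum>x\<in>A. card (Pair x ` (T `` {x})))"
    using assms by (intro card_UN_disjoint) auto
  ultimately show ?thesis by (simp add: card_image inj_on_def)
qed

lemma card_edges_into:
  assumes "finite T" "finite B"
  shows "card (T \<inter> UNIV \<times> B) = (\<Sum>y\<in>B. card (T\<inverse> `` {y}))"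
proof -
  have "T\<inverse> \<inter> B \<times> UNIV = prod.swap ` (T \<inter> UNIV \<times> B)" by force
  then have "card (T\<inverse> \<inter> B \<times> UNIV) = card (T \<inter> UNIV \<times> B)"
    by (simp add: card_image swap_inj_on)
  then show ?thesis using card_edges_from[of "T\<inverse>" B] assms by simp
qed

lemma card_closed_cut:
  assumes fin: "finite H" and HXY: "H \<subseteq> X \<times> Y" and SH: "S \<subseteq> H" and B: "B \<subseteq> Y"
    and closed_H: "\<And>x y. x \<in> A \<Longrightarrow> (x, y) \<in> H - S \<Longrightarrow> y \<in> B"
    and closed_S: "\<And>x y. (x, y) \<in> S \<Longrightarrow> y \<in> B \<Longrightarrow> x \<in> A"
  shows "card (S \<inter> A \<times> UNIV) = card (S \<inter> UNIV \<times> B) + card (H \<inter> A \<times> (Y - B))"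
proof -
  have "S \<inter> A \<times> UNIV = (S \<inter> UNIV \<times> B) \<union> (H \<inter> A \<times> (Y - B))"
    using HXY SH closed_H closed_S by fast
  moreover have "finite S" using fin SH by (rule finite_subset[rotated])
  ultimately show ?thesis using fin by (simp add: card_Un_disjoint disjoint_iff)
qed

context bipartite_subgraph
begin

definition reach :: "'a \<Rightarrow> 'a set" where
  "reach x0 = {last vs | vs. alternating_path H S vs \<and> vs ! 0 = x0}"

lemma start_in_reach: "x0 \<in> reach x0"
  unfolding reach_def alternating_path_def by (intro CollectI exI[of _ "[x0]"]) simp

lemma reach_step:
  assumes x0: "x0 \<in> X" and z: "z \<in> reach x0"
    and step: "(z \<in> X \<and> (z, u) \<in> H - S) \<or> (z \<in> Y \<and> (u, z) \<in> S)"
  shows "u \<in> reach x0"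
proof -
  obtain vs where vs: "alternating_path H S vs" "vs ! 0 = x0" "last vs = z"
    using z unfolding reach_def by auto
  have ne: "vs \<noteq> []" using vs(1) unfolding alternating_path_def by simp
  show ?thesis
  proof (cases "u \<in> set vs")
    case True
    then obtain j where j: "j < length vs" "vs ! j = u" by (auto simp: in_set_conv_nth)
    have "alternating_path H S (take (Suc j) vs)" by (rule alternating_path_take[OF vs(1)]) simp
    moreover have "take (Suc j) vs ! 0 = x0" using vs(2) by simp
    moreover have "last (take (Suc j) vs) = u" using j by (simp add: take_Suc_conv_app_nth)
    ultimately show ?thesis unfolding reach_def by blast
  next
    case False
    have "z \<in> X \<longleftrightarrow> odd (length vs)"
      using alternating_path_side(1)[OF vs(1), of "length vs - 1"] vs(2,3) x0 ne
      by (simp add: last_conv_nth)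
    then have "alternating_path H S (vs @ [u])"
      using alternating_path_snoc[OF vs(1) False] step vs(3) disjoint by auto
    then show ?thesis
      unfolding reach_def using vs(2) ne by (auto simp: nth_append intro!: exI[of _ "vs @ [u]"])
  qed
qed

end

context bipartite_subgraph
begin

lemma card_eq_sum_out_degree:
  assumes "T \<subseteq> X \<times> Y"
  shows "card T = (\<Sum>x\<in>X. card (T `` {x}))"
proof -
  have "T \<inter> X \<times> UNIV = T" using assms by auto
  then show ?thesis
    using card_edges_from[of T X] finite_X finite_subset[OF assms] finite_Y by auto
qed

lemma card_eq_sum_in_degree:
  assumes "T \<subseteq> X \<times> Y"
  shows "card T = (\<Sum>y\<in>Y. card (T\<inverse> `` {y}))"
proof -
  interpret conv: bipartite_subgraph Y X "H\<inverse>" "S\<inverse>" by (rule converse)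
  have "card (T\<inverse>) = card T" by (simp add: card_image swap_inj_on flip: converse_def)
  then show ?thesis using conv.card_eq_sum_out_degree[of "T\<inverse>"] assms by auto
qed

lemma augment_card:
  assumes vs: "alternating_path H S vs" and start: "vs ! 0 \<in> X" and stop: "last vs \<in> Y"
  shows "card (augment S vs) = card S + 1"
proof -
  have "augment S vs \<subseteq> X \<times> Y" using augment_subset[OF vs] H_sub by auto
  then have "card (augment S vs) = (\<Sum>x\<in>X. card (S `` {x}) + (if x = vs ! 0 then 1 else 0))"
    using card_eq_sum_out_degree augment_out_degree[OF vs start stop] by simp
  also have "\<dots> = card S + 1"
    using card_eq_sum_out_degree[of S] S_sub H_sub finite_X start by (simp add: sum.distrib)
  finally show ?thesis .
qed

lemma reach_violates_cut:
  fixes f :: "'a \<Rightarrow> nat"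
  assumes x0: "x0 \<in> X"
    and le_X: "\<And>x. x \<in> X \<Longrightarrow> card (S `` {x}) \<le> f x" and deficient: "card (S `` {x0}) < f x0"
    and saturated: "\<And>y. y \<in> reach x0 \<inter> Y \<Longrightarrow> f y \<le> card (S\<inverse> `` {y})"
  defines "A \<equiv> reach x0 \<inter> X" and "B \<equiv> reach x0 \<inter> Y"
  shows "(\<Sum>y\<in>B. f y) + card (H \<inter> A \<times> (Y - B)) < (\<Sum>x\<in>A. f x)"
proof -
  have A: "A \<subseteq> X" "finite A" and B: "B \<subseteq> Y" "finite B"
    unfolding A_def B_def using finite_X finite_Y by auto
  have "card (S \<inter> A \<times> UNIV) = card (S \<inter> UNIV \<times> B) + card (H \<inter> A \<times> (Y - B))"
  proof (rule card_closed_cut[OF finite_H H_sub S_sub B(1)])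
    show "y \<in> B" if "x \<in> A" "(x, y) \<in> H - S" for x y
      using reach_step[OF x0, of x y] that H_sub unfolding A_def B_def by auto
    show "x \<in> A" if "(x, y) \<in> S" "y \<in> B" for x y
      using reach_step[OF x0, of y x] that H_sub S_sub unfolding A_def B_def by auto
  qed
  then have "(\<Sum>x\<in>A. card (S `` {x})) = (\<Sum>y\<in>B. card (S\<inverse> `` {y})) + card (H \<inter> A \<times> (Y - B))"
    using card_edges_from[OF finite_S A(2)] card_edges_into[OF finite_S B(2)] by simp
  moreover have "(\<Sum>y\<in>B. f y) \<le> (\<Sum>y\<in>B. card (S\<inverse> `` {y}))"
    using saturated unfolding B_def by (intro sum_mono) auto
  moreover have "(\<Sum>x\<in>A. card (S `` {x})) < (\<Sum>x\<in>A. f x)"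
    using A le_X deficient x0 start_in_reach unfolding A_def by (intro sum_strict_mono_ex1) auto
  ultimately show ?thesis by linarith
qed

end

text \<open>Take a maximum subgraph \<open>S\<close> with degrees bounded by \<open>f\<close>. If some \<open>x \<in> X\<close> were deficient, every
  vertex of \<open>Y\<close> reachable from \<open>x\<close> by an alternating path would be saturated (otherwise augmenting
  along the path enlarges \<open>S\<close>), and then the reachable set violates the cut condition.\<close>
theorem bipartite_f_factor:
  fixes X Y :: "'a set" and H :: "('a \<times> 'a) set" and f :: "'a \<Rightarrow> nat"
  assumes finite: "finite X" "finite Y" and disjoint: "X \<inter> Y = {}" and H: "H \<subseteq> X \<times> Y"
    and sums: "(\<Sum>v\<in>X. f v) = (\<Sum>v\<in>Y. f v)"
    and cut: "\<And>A B. A \<subseteq> X \<Longrightarrow> B \<subseteq> Y \<Longrightarrow> (\<Sum>v\<in>A. f v) \<le> (\<Sum>v\<in>B. f v) + card (H \<inter> A \<times> (Y - B))"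
  shows "\<exists>S \<subseteq> H. (\<forall>x\<in>X. card (S `` {x}) = f x) \<and> (\<forall>y\<in>Y. card (S\<inverse> `` {y}) = f y)"
proof -
  define C where "C = {S. S \<subseteq> H \<and> (\<forall>x\<in>X. card (S `` {x}) \<le> f x) \<and> (\<forall>y\<in>Y. card (S\<inverse> `` {y}) \<le> f y)}"
  have finite_H: "finite H" using finite_subset[OF H] finite by blast
  have "{} \<in> C" unfolding C_def by simp
  moreover have "card S < Suc (card H)" if "S \<in> C" for S
    using that finite_H unfolding C_def by (auto intro: card_mono le_imp_less_Suc)
  ultimately obtain S where S: "S \<in> C" and max: "\<And>S'. S' \<in> C \<Longrightarrow> card S' \<le> card S"
    using Lattices_Big.ex_has_greatest_nat[of "\<lambda>S. S \<in> C" "{}" card] by blast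
  have S_H: "S \<subseteq> H" and le_X: "\<And>x. x \<in> X \<Longrightarrow> card (S `` {x}) \<le> f x"
    and le_Y: "\<And>y. y \<in> Y \<Longrightarrow> card (S\<inverse> `` {y}) \<le> f y" using S unfolding C_def by auto
  interpret bipartite_subgraph X Y H S using finite disjoint H S_H by unfold_locales
  have sat_X: "card (S `` {x}) = f x" if x: "x \<in> X" for x
  proof (rule ccontr)
    assume "card (S `` {x}) \<noteq> f x"
    then have deficient: "card (S `` {x}) < f x" using le_X[OF x] by simp
    have "f y \<le> card (S\<inverse> `` {y})" if y: "y \<in> reach x \<inter> Y" for y
    proof (rule ccontr)
      assume unsat: "\<not> ?thesis"
      obtain vs where vs: "alternating_path H S vs" "vs ! 0 = x" "last vs = y"
        using y unfolding reach_def by auto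
      have "augment S vs \<in> C"
        unfolding C_def using augment_subset[OF vs(1)] augment_out_degree[OF vs(1)] augment_in_degree[OF vs(1)]
          vs le_X le_Y deficient unsat x y by auto
      then show False using max augment_card[OF vs(1)] vs x y by fastforce
    qed
    then show False
      using reach_violates_cut[OF x le_X deficient] cut[of "reach x \<inter> X" "reach x \<inter> Y"] by fastforce
  qed
  have "card S = (\<Sum>x\<in>X. f x)"
    using card_eq_sum_out_degree[of S] S_H H sat_X by simp
  moreover have "card S = (\<Sum>y\<in>Y. card (S\<inverse> `` {y}))"
    using card_eq_sum_in_degree[of S] S_H H by simp
  ultimately have "(\<Sum>y\<in>Y. card (S\<inverse> `` {y})) = (\<Sum>y\<in>Y. f y)" using sums by simp
  then have "card (S\<inverse> `` {y}) = f y" if "y \<in> Y" for y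
    by (rule sum_mono_inv[OF _ le_Y that finite(2)])
  then show ?thesis using S_H sat_X by blast
qed

section \<open>The cut condition in expanders\<close>

text \<open>If \<open>a \<le> n/10\<close>, mixing bounds \<open>e\<^sub>G(A, B)\<close> by \<open>(3/29 + 59/696) D a\<close>, which leaves more than
  \<open>(\<rho> + \<alpha>) D a\<close> of the minimum degree \<open>D/5\<close>.\<close>
lemma small_side_bound:
  fixes D n a b e eAB \<rho> \<alpha> :: real
  assumes D: "D > 0" and n: "n > 0" and a: "a \<ge> 0" and b: "b \<ge> 0" and ab: "29 * b \<le> 30 * a"
    and small: "10 * a \<le> n" and \<rho>\<alpha>: "\<rho> + \<alpha> \<le> 1/100"
    and deg: "a * (D/5 - \<rho> * D) \<le> e + eAB" and mix: "eAB \<le> D * a * b / n + D / 12 * (a + b) / 2"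
  shows "\<alpha> * D * a \<le> e"
proof -
  define t where "t = D * a"
  have t: "t \<ge> 0" unfolding t_def using D a by simp
  have "b / n \<le> 3 / 29" using ab small n by (simp add: divide_le_eq)
  then have "t * (b / n) \<le> t * (3 / 29)" using t by (intro mult_left_mono) auto
  moreover have "D * b \<le> D * (30 / 29 * a)" using D ab by (intro mult_left_mono) auto
  moreover have "t * (1/5 - \<rho> - 3/29 - 59/696 - \<alpha>) \<ge> 0" using t \<rho>\<alpha> by (intro mult_nonneg_nonneg) auto
  moreover have "a * (D/5 - \<rho> * D) = t / 5 - \<rho> * t" "D * a * b / n = t * (b / n)"
    "D / 12 * (a + b) / 2 = t / 24 + D * b / 24" "D * (30 / 29 * a) = 30 / 29 * t"
    "t * (1/5 - \<rho> - 3/29 - 59/696 - \<alpha>) = t / 5 - \<rho> * t - 3/29 * t - 59/696 * t - \<alpha> * t"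
    "\<alpha> * D * a = \<alpha> * t"
    unfolding t_def by (simp_all add: algebra_simps)
  ultimately show ?thesis using deg mix by linarith
qed

text \<open>If \<open>a > n/10\<close>, mixing gives \<open>e\<^sub>G(A, C) \<ge> D c/10 - D c/12\<close>, which survives deleting \<open>\<rho> D c\<close> edges.\<close>
lemma large_side_bound:
  fixes D n a c e eAC \<rho> \<alpha> :: real
  assumes D: "D > 0" and n: "n > 0" and a: "a \<ge> 0" and ac: "a \<le> c" and large: "n < 10 * a"
    and \<alpha>: "\<alpha> \<ge> 0" and \<rho>\<alpha>: "\<rho> + \<alpha> \<le> 1/100"
    and deleted: "eAC \<le> e + \<rho> * D * c" and mix: "eAC \<ge> D * a * c / n - D / 12 * (a + c) / 2"
  shows "\<alpha> * D * a \<le> e"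
proof -
  define s where "s = D * c"
  define t where "t = D * a"
  have s: "s \<ge> 0" unfolding s_def using D a ac by simp
  have "1 / 10 < a / n" using large n by (simp add: less_divide_eq)
  then have "s * (1 / 10) \<le> s * (a / n)" using s by (intro mult_left_mono) auto
  moreover have "t \<le> s" unfolding s_def t_def using D ac by simp
  moreover have "\<alpha> * t \<le> \<alpha> * s" using \<alpha> \<open>t \<le> s\<close> by (intro mult_left_mono)
  moreover have "s * (1/60 - \<rho> - \<alpha>) \<ge> 0" using s \<rho>\<alpha> by (intro mult_nonneg_nonneg) auto
  moreover have "D * a * c / n = s * (a / n)" "D / 12 * (a + c) / 2 = t / 24 + s / 24"
    "\<rho> * D * c = \<rho> * s" "s * (1/60 - \<rho> - \<alpha>) = s / 60 - \<rho> * s - \<alpha> * s" "\<alpha> * D * a = \<alpha> * t"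
    unfolding s_def t_def by (simp_all add: algebra_simps)
  ultimately show ?thesis using deleted mix by linarith
qed

text \<open>Here \<open>a, b, c, a'\<close> are the sizes of \<open>A \<subseteq> X'\<close>, \<open>B \<subseteq> Y'\<close>, \<open>C = Y' - B\<close>, \<open>A' = X' - A\<close>;
  \<open>s = f(A) - f(B) = f(C) - f(A')\<close>, and \<open>e\<close> counts the edges of \<open>H - F\<close> between \<open>A\<close> and \<open>C\<close>.\<close>
lemma cut_condition_arith:
  fixes D n a b c a' e eAB eA'C eAC \<rho> \<alpha> \<gamma> s :: real
  assumes D: "D > 0" and n: "n > 0" and sizes: "a \<ge> 0" "b \<ge> 0" "c \<ge> 0" "a' \<ge> 0"
    and \<alpha>: "\<alpha> \<ge> 0" and \<rho>\<alpha>: "\<rho> + \<alpha> \<le> 1/100" and \<gamma>: "\<gamma> \<le> 1/30"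
    and e: "e \<ge> 0"
    and sA: "s \<le> \<alpha> * D * (a - (1 - \<gamma>) * b)" and sC: "s \<le> \<alpha> * D * (c - (1 - \<gamma>) * a')"
    and degA: "a * (D/5 - \<rho> * D) \<le> e + eAB" and mixAB: "\<bar>eAB - D * a * b / n\<bar> \<le> D / 12 * (a + b) / 2"
    and degC: "c * (D/5 - \<rho> * D) \<le> e + eA'C" and mixA'C: "\<bar>eA'C - D * a' * c / n\<bar> \<le> D / 12 * (a' + c) / 2"
    and delA: "eAC \<le> e + \<rho> * D * a" and delC: "eAC \<le> e + \<rho> * D * c"
    and mixAC: "\<bar>eAC - D * a * c / n\<bar> \<le> D / 12 * (a + c) / 2"
  shows "s \<le> e"
proof -
  have \<alpha>D: "\<alpha> * D \<ge> 0" using \<alpha> D by simp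
  have balanced: "29 * y \<le> 30 * x" if "\<not> x \<le> (1 - \<gamma>) * y" "y \<ge> 0" for x y :: real
  proof -
    have "(29/30) * y \<le> (1 - \<gamma>) * y" using \<gamma> that(2) by (intro mult_right_mono) auto
    then show ?thesis using that(1) by simp
  qed
  have "(1 - \<gamma>) * b \<ge> 0" "(1 - \<gamma>) * a' \<ge> 0" using \<gamma> sizes by simp_all
  then have "\<alpha> * D * (a - (1 - \<gamma>) * b) \<le> \<alpha> * D * a" "\<alpha> * D * (c - (1 - \<gamma>) * a') \<le> \<alpha> * D * c"
    using \<alpha>D by (simp_all add: mult_left_mono)
  then have s_le: "s \<le> \<alpha> * D * a" "s \<le> \<alpha> * D * c" using sA sC by linarith+
  have non_deficient: "s \<le> e" if "x \<le> (1 - \<gamma>) * y" "s \<le> \<alpha> * D * (x - (1 - \<gamma>) * y)" for x y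
    using that mult_nonneg_nonpos[OF \<alpha>D, of "x - (1 - \<gamma>) * y"] e by linarith
  consider "a \<le> (1 - \<gamma>) * b" | "c \<le> (1 - \<gamma>) * a'" | "29 * b \<le> 30 * a" "29 * a' \<le> 30 * c"
    using balanced sizes by blast
  then show ?thesis
  proof cases
    case 1
    then show ?thesis using non_deficient sA by blast
  next
    case 2
    then show ?thesis using non_deficient sC by blast
  next
    case 3
    have mixAB': "eAB \<le> D * a * b / n + D / 12 * (a + b) / 2"
      and mixAC': "eAC \<ge> D * a * c / n - D / 12 * (a + c) / 2"
      and mixA'C': "eA'C \<le> D * a' * c / n + D / 12 * (a' + c) / 2"
      using mixAB mixAC mixA'C by linarith+
    have mixCA: "eAC \<ge> D * c * a / n - D / 12 * (c + a) / 2"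
      using mixAC' by (simp add: mult.commute mult.left_commute add.commute)
    have mixCA': "eA'C \<le> D * c * a' / n + D / 12 * (c + a') / 2"
      using mixA'C' by (simp add: mult.commute mult.left_commute add.commute)
    consider "10 * a \<le> n" | "10 * c \<le> n" | "n < 10 * a" "n < 10 * c" "a \<le> c" | "n < 10 * c" "c \<le> a"
      by linarith
    then show ?thesis
    proof cases
      case 1
      then show ?thesis using small_side_bound[OF D n sizes(1,2) 3(1) 1 \<rho>\<alpha> degA mixAB'] s_le by simp
    next
      case 2
      then show ?thesis using small_side_bound[OF D n sizes(3,4) 3(2) 2 \<rho>\<alpha> degC mixCA'] s_le by simp
    next
      case 3
      then show ?thesis using large_side_bound[OF D n sizes(1) _ _ \<alpha> \<rho>\<alpha> delC mixAC'] s_le by simp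
    next
      case 4
      then show ?thesis using large_side_bound[OF D n sizes(3) _ _ \<alpha> \<rho>\<alpha> delA mixCA] s_le by simp
    qed
  qed
qed

lemma card_edges_split:
  assumes "finite T" "T \<subseteq> X \<times> Y" "B \<subseteq> Y"
  shows "card (T \<inter> A \<times> UNIV) = card (T \<inter> A \<times> B) + card (T \<inter> A \<times> (Y - B))"
proof -
  have "T \<inter> A \<times> UNIV = (T \<inter> A \<times> B) \<union> (T \<inter> A \<times> (Y - B))" using assms(2,3) by auto
  then show ?thesis using assms(1) by (simp add: card_Un_disjoint disjoint_iff)
qed

lemma card_edges_diff:
  assumes "finite H" "F \<subseteq> H"
  shows "card (H \<inter> R) = card ((H - F) \<inter> R) + card (F \<inter> R)"
proof -
  have "H \<inter> R = ((H - F) \<inter> R) \<union> (F \<inter> R)" using assms(2) by auto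
  moreover have "finite F" using assms finite_subset by blast
  ultimately show ?thesis using assms(1) by (simp add: card_Un_disjoint disjoint_iff)
qed

lemma cut_edges_bounds:
  fixes X Y A B :: "'a set" and H F :: "('a \<times> 'a) set" and \<delta> \<Delta> e :: real
  assumes fin: "finite X" "finite Y" and H: "H \<subseteq> X \<times> Y" and F: "F \<subseteq> H"
    and A: "A \<subseteq> X" and B: "B \<subseteq> Y"
    and min_X: "\<And>x. x \<in> X \<Longrightarrow> \<delta> \<le> card ((H - F) `` {x})"
    and min_Y: "\<And>y. y \<in> Y \<Longrightarrow> \<delta> \<le> card ((H - F)\<inverse> `` {y})"
    and max_X: "\<And>x. x \<in> X \<Longrightarrow> card (F `` {x}) \<le> \<Delta>"
    and max_Y: "\<And>y. y \<in> Y \<Longrightarrow> card (F\<inverse> `` {y}) \<le> \<Delta>"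
  defines "e \<equiv> real (card ((H - F) \<inter> A \<times> (Y - B)))"
  shows "card A * \<delta> \<le> e + card (H \<inter> A \<times> B)"
    and "card (Y - B) * \<delta> \<le> e + card (H \<inter> (X - A) \<times> (Y - B))"
    and "card (H \<inter> A \<times> (Y - B)) \<le> e + \<Delta> * card A"
    and "card (H \<inter> A \<times> (Y - B)) \<le> e + \<Delta> * card (Y - B)"
proof -
  have finH: "finite H" using finite_subset[OF H] fin by blast
  have finHF: "finite (H - F)" "finite F" using finH F finite_subset by auto
  have HF: "H - F \<subseteq> X \<times> Y" using H by auto
  have finA: "finite A" and finC: "finite (Y - B)" using A fin finite_subset by auto
  have "card A * \<delta> \<le> (\<Sum>x\<in>A. card ((H - F) `` {x}))"
    using sum_mono[of A "\<lambda>_. \<delta>" "\<lambda>x. card ((H - F) `` {x})"] min_X A by auto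
  also have "\<dots> = card ((H - F) \<inter> A \<times> B) + card ((H - F) \<inter> A \<times> (Y - B))"
    using card_edges_from[OF finHF(1) finA] card_edges_split[OF finHF(1) HF B, of A]
    by (auto simp flip: of_nat_sum)
  also have "card ((H - F) \<inter> A \<times> B) \<le> card (H \<inter> A \<times> B)"
    using finH by (intro card_mono) auto
  finally show "card A * \<delta> \<le> e + card (H \<inter> A \<times> B)" unfolding e_def by simp
  have "card (Y - B) * \<delta> \<le> (\<Sum>y\<in>Y - B. card ((H - F)\<inverse> `` {y}))"
    using sum_mono[of "Y - B" "\<lambda>_. \<delta>" "\<lambda>y. card ((H - F)\<inverse> `` {y})"] min_Y by auto
  also have "\<dots> = card ((H - F) \<inter> UNIV \<times> (Y - B))" using card_edges_into[OF finHF(1) finC] by simp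
  also have "(H - F) \<inter> UNIV \<times> (Y - B) = ((H - F) \<inter> A \<times> (Y - B)) \<union> ((H - F) \<inter> (X - A) \<times> (Y - B))"
    using H by auto
  also have "card \<dots> = card ((H - F) \<inter> A \<times> (Y - B)) + card ((H - F) \<inter> (X - A) \<times> (Y - B))"
    using finHF(1) by (intro card_Un_disjoint) auto
  also have "card ((H - F) \<inter> (X - A) \<times> (Y - B)) \<le> card (H \<inter> (X - A) \<times> (Y - B))"
    using finH by (intro card_mono) auto
  finally show "card (Y - B) * \<delta> \<le> e + card (H \<inter> (X - A) \<times> (Y - B))" unfolding e_def by simp
  have split: "card (H \<inter> A \<times> (Y - B)) = e + card (F \<inter> A \<times> (Y - B))"
    unfolding e_def using card_edges_diff[OF finH F] by simp
  have "card (F \<inter> A \<times> (Y - B)) \<le> card (F \<inter> A \<times> UNIV)" using finHF by (intro card_mono) auto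
  also have "\<dots> = (\<Sum>x\<in>A. card (F `` {x}))" by (rule card_edges_from[OF finHF(2) finA])
  finally have "real (card (F \<inter> A \<times> (Y - B))) \<le> (\<Sum>x\<in>A. real (card (F `` {x})))"
    by (metis of_nat_le_iff of_nat_sum)
  also have "\<dots> \<le> \<Delta> * card A"
    using sum_mono[of A "\<lambda>x. real (card (F `` {x}))" "\<lambda>_. \<Delta>"] max_X A by (auto simp: mult.commute)
  finally have "real (card (F \<inter> A \<times> (Y - B))) \<le> \<Delta> * card A" .
  then show "card (H \<inter> A \<times> (Y - B)) \<le> e + \<Delta> * card A" using split by simp
  have "card (F \<inter> A \<times> (Y - B)) \<le> card (F \<inter> UNIV \<times> (Y - B))" using finHF by (intro card_mono) auto
  also have "\<dots> = (\<Sum>y\<in>Y - B. card (F\<inverse> `` {y}))" by (rule card_edges_into[OF finHF(2) finC])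
  finally have "real (card (F \<inter> A \<times> (Y - B))) \<le> (\<Sum>y\<in>Y - B. real (card (F\<inverse> `` {y})))"
    by (metis of_nat_le_iff of_nat_sum)
  also have "\<dots> \<le> \<Delta> * card (Y - B)"
    using sum_mono[of "Y - B" "\<lambda>y. real (card (F\<inverse> `` {y}))" "\<lambda>_. \<Delta>"] max_Y by (auto simp: mult.commute)
  finally have "real (card (F \<inter> A \<times> (Y - B))) \<le> \<Delta> * card (Y - B)" .
  then show "card (H \<inter> A \<times> (Y - B)) \<le> e + \<Delta> * card (Y - B)" using split by simp
qed

lemma bdeg_out:
  assumes "T \<subseteq> X \<times> Y" "v \<notin> Y"
  shows "bdeg T v = card (T `` {v})"
proof -
  have "{u. (u, v) \<in> T} = {}" using assms by auto
  then show ?thesis unfolding bdeg_def by (simp add: Image_singleton)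
qed

lemma bdeg_in:
  assumes "T \<subseteq> X \<times> Y" "v \<notin> X"
  shows "bdeg T v = card (T\<inverse> `` {v})"
proof -
  have "{u. (v, u) \<in> T} = {}" using assms by auto
  then show ?thesis unfolding bdeg_def by (simp add: Image_singleton)
qed

lemma card_Image_diff:
  assumes "finite H" "F \<subseteq> H"
  shows "card ((H - F) `` {v}) = card (H `` {v}) - card (F `` {v})"
    and "card (F `` {v}) \<le> card (H `` {v})"
proof -
  have "(H - F) `` {v} = H `` {v} - F `` {v}" "F `` {v} \<subseteq> H `` {v}" using assms(2) by auto
  moreover have "finite (H `` {v})" using assms(1) by (rule finite_Image)
  ultimately show "card ((H - F) `` {v}) = card (H `` {v}) - card (F `` {v})"
    and "card (F `` {v}) \<le> card (H `` {v})"
    by (auto simp: card_Diff_subset card_mono finite_subset)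
qed

lemma card_bip_edges:
  assumes "A \<subseteq> X" "B \<subseteq> Y" "finite A" "finite B"
  shows "real (card (bip_edges E X Y \<inter> A \<times> B)) = (\<Sum>i\<in>A. \<Sum>j\<in>B. if E i j then 1 else 0)"
proof -
  have "bip_edges E X Y \<inter> A \<times> B = Sigma A (\<lambda>i. {j \<in> B. E i j})"
    using assms unfolding bip_edges_def by auto
  then have "card (bip_edges E X Y \<inter> A \<times> B) = (\<Sum>i\<in>A. card {j \<in> B. E i j})"
    using assms by (simp add: card_SigmaI)
  then show ?thesis using assms(4) by (simp add: sum.If_cases Int_def)
qed

lemma degree_bounds_Image:
  fixes \<delta> \<Delta> :: real
  assumes HXY: "H \<subseteq> X \<times> Y" and disj: "X \<inter> Y = {}" and fin: "finite H" and F: "F \<subseteq> H"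
    and min_deg: "\<forall>v\<in>X \<union> Y. \<delta> \<le> real (bdeg H v)" and max_deg: "\<forall>v\<in>X \<union> Y. real (bdeg F v) \<le> \<Delta>"
  shows "\<And>x. x \<in> X \<Longrightarrow> card (F `` {x}) \<le> \<Delta>" and "\<And>y. y \<in> Y \<Longrightarrow> card (F\<inverse> `` {y}) \<le> \<Delta>"
    and "\<And>x. x \<in> X \<Longrightarrow> \<delta> - \<Delta> \<le> card ((H - F) `` {x})"
    and "\<And>y. y \<in> Y \<Longrightarrow> \<delta> - \<Delta> \<le> card ((H - F)\<inverse> `` {y})"
proof -
  have FXY: "F \<subseteq> X \<times> Y" using F HXY by auto
  have out: "bdeg T x = card (T `` {x})" if "T \<subseteq> X \<times> Y" "x \<in> X" for T x
    using bdeg_out[OF that(1)] that(2) disj by auto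
  have into: "bdeg T y = card (T\<inverse> `` {y})" if "T \<subseteq> X \<times> Y" "y \<in> Y" for T y
    using bdeg_in[OF that(1)] that(2) disj by auto
  show max_X: "card (F `` {x}) \<le> \<Delta>" if "x \<in> X" for x
    using max_deg that out[OF FXY that] by force
  show max_Y: "card (F\<inverse> `` {y}) \<le> \<Delta>" if "y \<in> Y" for y
    using max_deg that into[OF FXY that] by force
  show "\<delta> - \<Delta> \<le> card ((H - F) `` {x})" if x: "x \<in> X" for x
    using min_deg x out[OF HXY x] max_X[OF x] card_Image_diff[OF fin F, of x] by (force simp: of_nat_diff)
  have "(H - F)\<inverse> = H\<inverse> - F\<inverse>" by auto
  then show "\<delta> - \<Delta> \<le> card ((H - F)\<inverse> `` {y})" if y: "y \<in> Y" for y
    using min_deg y into[OF HXY y] max_Y[OF y] card_Image_diff[of "H\<inverse>" "F\<inverse>" y] fin F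
    by (force simp: of_nat_diff)
qed

lemma expander_mixing_bip_edges:
  assumes G: "ndl_graph n d lam E" and lam: "lam \<le> real d / 12" and d: "d > 0"
    and XY: "X \<union> Y = {0..<n}" and S: "S \<subseteq> X" and T: "T \<subseteq> Y"
  shows "\<bar>card (bip_edges E X Y \<inter> S \<times> T) - real d * card S * card T / n\<bar>
           \<le> real d / 12 * (real (card S) + card T) / 2"
proof -
  have ST: "finite S" "finite T" "S \<subseteq> {..<n}" "T \<subseteq> {..<n}"
    using S T XY by (auto intro: finite_subset[of _ "{0..<n}"])
  have "\<bar>card (bip_edges E X Y \<inter> S \<times> T) - real d * card S * card T / n\<bar>
      \<le> lam * (real (card S) + card T) / 2"
    using card_bip_edges[OF S T ST(1,2)] expander_mixing[OF G _ ST(3,4)] lam d by simp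
  also have "\<dots> \<le> real d / 12 * (real (card S) + card T) / 2"
    using mult_right_mono[OF lam, of "card S + card T"] by simp
  finally show ?thesis .
qed

lemma degree_budget:
  fixes f :: "nat \<Rightarrow> nat" and X' Y' A B :: "nat set" and \<gamma> t s :: real
  assumes fin: "finite X'" "finite Y'" and A: "A \<subseteq> X'" and B: "B \<subseteq> Y'"
    and f: "\<forall>v\<in>X' \<union> Y'. (1 - \<gamma>) * t \<le> real (f v) \<and> real (f v) \<le> t"
    and f_sum: "(\<Sum>v\<in>X'. f v) = (\<Sum>v\<in>Y'. f v)"
  defines "s \<equiv> (\<Sum>v\<in>A. real (f v)) - (\<Sum>v\<in>B. real (f v))"
  shows "s \<le> t * (card A - (1 - \<gamma>) * card B)" and "s \<le> t * (card (Y' - B) - (1 - \<gamma>) * card (X' - A))"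
proof -
  have le: "(\<Sum>v\<in>S. real (f v)) \<le> card S * t" if "S \<subseteq> X' \<union> Y'" for S
    using sum_mono[of S "\<lambda>v. real (f v)" "\<lambda>_. t"] f that by auto
  have ge: "card S * ((1 - \<gamma>) * t) \<le> (\<Sum>v\<in>S. real (f v))" if "S \<subseteq> X' \<union> Y'" for S
    using sum_mono[of S "\<lambda>_. (1 - \<gamma>) * t" "\<lambda>v. real (f v)"] f that by auto
  have "(\<Sum>v\<in>X'. real (f v)) = (\<Sum>v\<in>Y'. real (f v))" using arg_cong[OF f_sum, of real] by simp
  then have "s = (\<Sum>v\<in>Y' - B. real (f v)) - (\<Sum>v\<in>X' - A. real (f v))"
    using sum.subset_diff[OF A fin(1), of "\<lambda>v. real (f v)"] sum.subset_diff[OF B fin(2), of "\<lambda>v. real (f v)"]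
    unfolding s_def by simp
  moreover have "t * (card A - (1 - \<gamma>) * card B) = card A * t - card B * ((1 - \<gamma>) * t)"
    "t * (card (Y' - B) - (1 - \<gamma>) * card (X' - A)) = card (Y' - B) * t - card (X' - A) * ((1 - \<gamma>) * t)"
    by (simp_all add: algebra_simps)
  ultimately show "s \<le> t * (card A - (1 - \<gamma>) * card B)"
    and "s \<le> t * (card (Y' - B) - (1 - \<gamma>) * card (X' - A))"
    using le[of A] ge[of B] le[of "Y' - B"] ge[of "X' - A"] A B unfolding s_def by (auto simp: subset_eq)
qed

lemma expander_cut_condition:
  fixes \<rho> \<alpha> \<gamma> lam :: real and n d :: nat and E :: "nat \<Rightarrow> nat \<Rightarrow> bool"
    and X Y X' Y' A B :: "nat set" and F :: "(nat \<times> nat) set" and f :: "nat \<Rightarrow> nat"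
  assumes \<alpha>: "\<alpha> > 0" and \<rho>\<alpha>: "\<rho> + \<alpha> \<le> 1/100" and \<gamma>: "\<gamma> \<le> 1/30"
    and G: "ndl_graph n d lam E" and lam: "lam \<le> real d / 12"
    and XY: "X \<inter> Y = {}" "X \<union> Y = {0..<n}" and X': "X' \<subseteq> X" and Y': "Y' \<subseteq> Y"
    and min_deg: "\<forall>v\<in>X' \<union> Y'. real d / 5 \<le> real (bdeg (bip_edges E X Y \<inter> X' \<times> Y') v)"
    and F: "F \<subseteq> bip_edges E X Y \<inter> X' \<times> Y'" and max_deg: "\<forall>v\<in>X' \<union> Y'. real (bdeg F v) \<le> \<rho> * real d"
    and f: "\<forall>v\<in>X' \<union> Y'. (1 - \<gamma>) * (\<alpha> * real d) \<le> real (f v) \<and> real (f v) \<le> \<alpha> * real d"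
    and f_sum: "(\<Sum>v\<in>X'. f v) = (\<Sum>v\<in>Y'. f v)"
    and A: "A \<subseteq> X'" and B: "B \<subseteq> Y'"
  defines "H \<equiv> bip_edges E X Y \<inter> X' \<times> Y'"
  shows "(\<Sum>v\<in>A. f v) \<le> (\<Sum>v\<in>B. f v) + card ((H - F) \<inter> A \<times> (Y' - B))"
proof (cases "d = 0 \<or> n = 0")
  case True
  then have "f v = 0" if "v \<in> A" for v using f that A X' XY(2) \<alpha> by auto
  then show ?thesis by simp
next
  case False
  then have D: "real d > 0" and n: "real n > 0" by auto
  have fin: "finite X'" "finite Y'" using X' Y' XY(2) by (auto intro: finite_subset[of _ "{0..<n}"])
  have HXY: "H \<subseteq> X' \<times> Y'" and disj: "X' \<inter> Y' = {}" using X' Y' XY(1) unfolding H_def by auto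
  have finH: "finite H" using HXY fin finite_subset by blast
  note degs = degree_bounds_Image[OF HXY disj finH F[folded H_def] min_deg[folded H_def] max_deg]
  define e where "e = real (card ((H - F) \<inter> A \<times> (Y' - B)))"
  have cut: "card A * (real d / 5 - \<rho> * real d) \<le> e + card (H \<inter> A \<times> B)"
    "card (Y' - B) * (real d / 5 - \<rho> * real d) \<le> e + card (H \<inter> (X' - A) \<times> (Y' - B))"
    "card (H \<inter> A \<times> (Y' - B)) \<le> e + \<rho> * real d * card A"
    "card (H \<inter> A \<times> (Y' - B)) \<le> e + \<rho> * real d * card (Y' - B)"
    using cut_edges_bounds[OF fin HXY F[folded H_def] A B, of "real d / 5 - \<rho> * real d" "\<rho> * real d"] degs
    unfolding e_def by auto
  have mix: "\<bar>card (H \<inter> S \<times> T) - real d * card S * card T / n\<bar> \<le> real d / 12 * (real (card S) + card T) / 2"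
    if "S \<subseteq> X'" "T \<subseteq> Y'" for S T
  proof -
    have "H \<inter> S \<times> T = bip_edges E X Y \<inter> S \<times> T" using that unfolding H_def by auto
    then show ?thesis using expander_mixing_bip_edges[OF G lam _ XY(2)] that X' Y' False by auto
  qed
  note budget = degree_budget[OF fin A B f f_sum]
  have "(\<Sum>v\<in>A. real (f v)) - (\<Sum>v\<in>B. real (f v)) \<le> e"
    by (rule cut_condition_arith[OF D n _ _ _ _ less_imp_le[OF \<alpha>] \<rho>\<alpha> \<gamma> _ budget
          cut(1) mix[OF A B] cut(2) mix[of "X' - A" "Y' - B"] cut(3,4) mix[of A "Y' - B"]])
      (use A B in \<open>auto simp: e_def\<close>)
  then have "real (\<Sum>v\<in>A. f v) \<le> real ((\<Sum>v\<in>B. f v) + card ((H - F) \<inter> A \<times> (Y' - B)))"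
    unfolding e_def by simp
  then show ?thesis by linarith
qed

lemma is_f_factorI:
  assumes ST: "S \<subseteq> T" and T: "T \<subseteq> X \<times> Y" and disj: "X \<inter> Y = {}"
    and deg_X: "\<forall>x\<in>X. card (S `` {x}) = f x" and deg_Y: "\<forall>y\<in>Y. card (S\<inverse> `` {y}) = f y"
  shows "is_f_factor X Y T f S"
  unfolding is_f_factor_def
proof (intro conjI ballI ST)
  have S: "S \<subseteq> X \<times> Y" using ST T by auto
  fix v assume "v \<in> X \<union> Y"
  then consider "v \<in> X" "v \<notin> Y" | "v \<in> Y" "v \<notin> X" using disj by auto
  then show "bdeg S v = f v"
    by cases (use bdeg_out[OF S] bdeg_in[OF S] deg_X deg_Y in auto)
qed

lemma expander_robustly_matchable:
  fixes \<rho> \<alpha> \<gamma> lam :: real and n d :: nat and E :: "nat \<Rightarrow> nat \<Rightarrow> bool"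
  assumes \<rho>\<alpha>: "\<rho> + \<alpha> \<le> 1/100" and \<gamma>: "\<gamma> \<le> 1/30"
    and G: "ndl_graph n d lam E" and lam: "lam \<le> real d / 12"
    and XY: "X \<inter> Y = {}" "X \<union> Y = {0..<n}" and X': "X' \<subseteq> X" and Y': "Y' \<subseteq> Y"
    and min_deg: "\<forall>v\<in>X' \<union> Y'. real d / 5 \<le> real (bdeg (bip_edges E X Y \<inter> X' \<times> Y') v)"
  shows "robustly_matchable X' Y' (bip_edges E X Y \<inter> X' \<times> Y') (real d) \<rho> \<alpha> \<gamma>"
  unfolding robustly_matchable_def
proof (intro allI impI, elim conjE)
  fix F \<alpha>' and f :: "nat \<Rightarrow> nat"
  assume F: "F \<subseteq> bip_edges E X Y \<inter> X' \<times> Y'" and max_deg: "\<forall>v\<in>X' \<union> Y'. real (bdeg F v) \<le> \<rho> * real d"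
    and \<alpha>': "0 < \<alpha>'" "\<alpha>' \<le> \<alpha>"
    and f: "\<forall>v\<in>X' \<union> Y'. (1 - \<gamma>) * \<alpha>' * real d \<le> real (f v) \<and> real (f v) \<le> \<alpha>' * real d"
    and f_sum: "(\<Sum>v\<in>X'. f v) = (\<Sum>v\<in>Y'. f v)"
  define H where "H = bip_edges E X Y \<inter> X' \<times> Y'"
  have fin: "finite X'" "finite Y'" using X' Y' XY(2) by (auto intro: finite_subset[of _ "{0..<n}"])
  have HF: "H - F \<subseteq> X' \<times> Y'" and disj: "X' \<inter> Y' = {}" using X' Y' XY(1) unfolding H_def by auto
  have "\<rho> + \<alpha>' \<le> 1/100" using \<rho>\<alpha> \<alpha>' by simp
  note cut = expander_cut_condition[OF \<alpha>'(1) this \<gamma> G lam XY X' Y' min_deg F max_deg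
      f[unfolded mult.assoc] f_sum, folded H_def]
  obtain S where "S \<subseteq> H - F" "\<forall>x\<in>X'. card (S `` {x}) = f x" "\<forall>y\<in>Y'. card (S\<inverse> `` {y}) = f y"
    using bipartite_f_factor[OF fin disj HF f_sum cut] by blast
  then show "\<exists>S. is_f_factor X' Y' (bip_edges E X Y \<inter> X' \<times> Y' - F) f S"
    using is_f_factorI HF disj unfolding H_def by blast
qed

theorem lemma4p5:
  fixes \<rho> \<alpha> \<gamma> lam :: real and n d :: nat and E :: "nat \<Rightarrow> nat \<Rightarrow> bool"
  assumes "\<rho> > 0" "\<alpha> > 0" "\<gamma> > 0" "\<rho> + \<alpha> \<le> 1/100" "\<gamma> \<le> 1/30"
    and "ndl_graph n d lam E" and "even n" and "lam \<le> real d / 12"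
  shows "\<forall>X Y. X \<inter> Y = {} \<and> X \<union> Y = {0..<n} \<and> card X = card Y \<longrightarrow>
           good X Y (bip_edges E X Y) (real d) \<rho> \<alpha> \<gamma>"
  unfolding good_def
proof (intro allI impI, elim conjE)
  fix X Y X' Y' :: "nat set"
  assume "X \<inter> Y = {}" "X \<union> Y = {0..<n}" "X' \<subseteq> X" "Y' \<subseteq> Y"
    and "\<forall>v\<in>X' \<union> Y'. real d / 5 \<le> real (bdeg (bip_edges E X Y \<inter> X' \<times> Y') v)"
  then show "robustly_matchable X' Y' (bip_edges E X Y \<inter> X' \<times> Y') (real d) \<rho> \<alpha> \<gamma>"
    using expander_robustly_matchable assms less_imp_le by blast
qed

end
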